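(* Let $W$ be a neat, upward-restricted layered wheel. Then the class of finite induced subgraphs of $W$ has bounded twin-width.
   Context: A layered wheel is a countably infinite graph $W$ on the same vertex set as a countably infinite, locally finite rooted tree $T$ embedded in the plane, such that: (1) for every natural number $n$, the set $L_n$ of nodes at distance $n$ from the root induces in $W$ a finite path visiting $L_n$ in the left-to-right order of the embedding; edges inside layers are layer edges, forming $E_L$; (2) every edge not in $E_L$ joins two nodes in ancestor–descendant relation in $T$; (3) there is a finite bound on the length of paths in $T$ consisting only of degree-$2$ nodes of $T$. A node is its own ancestor and descendant. $W$ is neat if $T$ has no leaf; $W$ is upward-restricted if there is an integer $t$ such that for every node $v$ there is a set $X_v$ of at most $t$ ancestors of $v$ such that in $W-E_L$ every edge with exactly one endpoint among the descendants of $v$ has its other endpoint in $X_v$. Twin-width: a partition sequence of an $n$-vertex graph $G$ is a sequence $\mathcal P_n,\dots,\mathcal P_1$ of partitions of $V(G)$ where $\mathcal P_n$ is the partition into singletons and each $\mathcal P_i$ ($i<n$) is obtained from $\mathcal P_{i+1}$ by merging two parts. For a partition $\mathcal P$, the red graph $\mathcal R(\mathcal P)$ has vertex set $\mathcal P$ and an edge between distinct parts $P,P'$ whenever there are $u,v\in P$ and $u',v'\in P'$ (possibly $u=v$ or $u'=v'$) with $uu'\in E(G)$ and $vv'\notin E(G)$. The twin-width of $G$ is the least $d$ such that $G$ has a partition sequence all of whose red graphs have maximum degree at most $d$. *)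

theory Defs
  imports "HOL-Library.Countable_Set"
begin

text \<open>A rooted tree on vertex set V with root r is given by a parent function par:
every non-root vertex has its parent in V, and iterating par from any vertex reaches r.\<close>

definition rooted_tree :: "'a set \<Rightarrow> 'a \<Rightarrow> ('a \<Rightarrow> 'a) \<Rightarrow> bool" where
  "rooted_tree V r par \<longleftrightarrow> r \<in> V \<and> (\<forall>v\<in>V. v \<noteq> r \<longrightarrow> par v \<in> V)
     \<and> (\<forall>v\<in>V. \<exists>n. (par ^^ n) v = r)"

definition children :: "'a set \<Rightarrow> 'a \<Rightarrow> ('a \<Rightarrow> 'a) \<Rightarrow> 'a \<Rightarrow> 'a set" where
  "children V r par v = {u \<in> V. u \<noteq> r \<and> par u = v}"

definition depth :: "'a \<Rightarrow> ('a \<Rightarrow> 'a) \<Rightarrow> 'a \<Rightarrow> nat" where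
  "depth r par v = (LEAST n. (par ^^ n) v = r)"

text \<open>ancestor r par u v: u is an ancestor of v (every node is its own ancestor)\<close>
definition ancestor :: "'a \<Rightarrow> ('a \<Rightarrow> 'a) \<Rightarrow> 'a \<Rightarrow> 'a \<Rightarrow> bool" where
  "ancestor r par u v \<longleftrightarrow> (\<exists>n \<le> depth r par v. (par ^^ n) v = u)"

definition layer :: "'a set \<Rightarrow> 'a \<Rightarrow> ('a \<Rightarrow> 'a) \<Rightarrow> nat \<Rightarrow> 'a set" where
  "layer V r par n = {v \<in> V. depth r par v = n}"

definition tadj :: "'a set \<Rightarrow> 'a \<Rightarrow> ('a \<Rightarrow> 'a) \<Rightarrow> 'a \<Rightarrow> 'a \<Rightarrow> bool" where
  "tadj V r par u v \<longleftrightarrow> u \<in> V \<and> v \<in> V \<and> ((u \<noteq> r \<and> par u = v) \<or> (v \<noteq> r \<and> par v = u))"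

definition tdeg :: "'a set \<Rightarrow> 'a \<Rightarrow> ('a \<Rightarrow> 'a) \<Rightarrow> 'a \<Rightarrow> nat" where
  "tdeg V r par v = card {u. tadj V r par u v}"

text \<open>a path in T, as a nonempty list of distinct vertices; its length is length xs - 1\<close>
definition tree_path :: "'a set \<Rightarrow> 'a \<Rightarrow> ('a \<Rightarrow> 'a) \<Rightarrow> 'a list \<Rightarrow> bool" where
  "tree_path V r par xs \<longleftrightarrow> xs \<noteq> [] \<and> distinct xs \<and> set xs \<subseteq> V \<and>
     (\<forall>i. Suc i < length xs \<longrightarrow> tadj V r par (xs ! i) (xs ! Suc i))"

text \<open>A plane embedding of the rooted tree, given by a left-to-right strict linear order lt on
each layer, compatible with the tree (children of a node to the left lie to the left).\<close>
definition plane_order :: "'a set \<Rightarrow> 'a \<Rightarrow> ('a \<Rightarrow> 'a) \<Rightarrow> ('a \<Rightarrow> 'a \<Rightarrow> bool) \<Rightarrow> bool" where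
  "plane_order V r par lt \<longleftrightarrow>
     (\<forall>u v. lt u v \<longrightarrow> u \<in> V \<and> v \<in> V \<and> depth r par u = depth r par v)
   \<and> (\<forall>u. \<not> lt u u)
   \<and> (\<forall>u v w. lt u v \<longrightarrow> lt v w \<longrightarrow> lt u w)
   \<and> (\<forall>u\<in>V. \<forall>v\<in>V. depth r par u = depth r par v \<longrightarrow> u = v \<or> lt u v \<or> lt v u)
   \<and> (\<forall>u\<in>V. \<forall>v\<in>V. u \<noteq> r \<longrightarrow> v \<noteq> r \<longrightarrow> lt (par u) (par v) \<longrightarrow> lt u v)"

definition simple_graph :: "'a set \<Rightarrow> ('a \<Rightarrow> 'a \<Rightarrow> bool) \<Rightarrow> bool" where
  "simple_graph V E \<longleftrightarrow> (\<forall>u v. E u v \<longrightarrow> u \<in> V \<and> v \<in> V \<and> u \<noteq> v \<and> E v u)"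

definition consecutive :: "('a \<Rightarrow> 'a \<Rightarrow> bool) \<Rightarrow> 'a \<Rightarrow> 'a \<Rightarrow> bool" where
  "consecutive lt u v \<longleftrightarrow> lt u v \<and> \<not> (\<exists>w. lt u w \<and> lt w v)"

definition layer_edge :: "'a \<Rightarrow> ('a \<Rightarrow> 'a) \<Rightarrow> ('a \<Rightarrow> 'a \<Rightarrow> bool) \<Rightarrow> 'a \<Rightarrow> 'a \<Rightarrow> bool" where
  "layer_edge r par E u v \<longleftrightarrow> E u v \<and> depth r par u = depth r par v"

definition layered_wheel ::
  "'a set \<Rightarrow> 'a \<Rightarrow> ('a \<Rightarrow> 'a) \<Rightarrow> ('a \<Rightarrow> 'a \<Rightarrow> bool) \<Rightarrow> ('a \<Rightarrow> 'a \<Rightarrow> bool) \<Rightarrow> bool" where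
  "layered_wheel V r par lt E \<longleftrightarrow>
     \<comment> \<open>T: countably infinite, locally finite rooted tree embedded in the plane\<close>
     countable V \<and> infinite V \<and> rooted_tree V r par
   \<and> (\<forall>v\<in>V. finite (children V r par v))
   \<and> plane_order V r par lt
     \<comment> \<open>W: simple graph on V\<close>
   \<and> simple_graph V E
     \<comment> \<open>(1) each layer induces a finite path in left-to-right order\<close>
   \<and> (\<forall>n. finite (layer V r par n))
   \<and> (\<forall>n. \<forall>u\<in>layer V r par n. \<forall>v\<in>layer V r par n.
          E u v \<longleftrightarrow> consecutive lt u v \<or> consecutive lt v u)
     \<comment> \<open>(2) edges not in E_L join ancestor-descendant pairs\<close>
   \<and> (\<forall>u v. E u v \<and> \<not> layer_edge r par E u v \<longrightarrow> ancestor r par u v \<or> ancestor r par v u)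
     \<comment> \<open>(3) bounded length of paths of T consisting of degree-2 nodes of T\<close>
   \<and> (\<exists>k. \<forall>xs. tree_path V r par xs \<and> (\<forall>x\<in>set xs. tdeg V r par x = 2) \<longrightarrow> length xs - 1 \<le> k)"

definition neat :: "'a set \<Rightarrow> 'a \<Rightarrow> ('a \<Rightarrow> 'a) \<Rightarrow> bool" where
  "neat V r par \<longleftrightarrow> (\<forall>v\<in>V. children V r par v \<noteq> {})"

definition upward_restricted ::
  "'a set \<Rightarrow> 'a \<Rightarrow> ('a \<Rightarrow> 'a) \<Rightarrow> ('a \<Rightarrow> 'a \<Rightarrow> bool) \<Rightarrow> bool" where
  "upward_restricted V r par E \<longleftrightarrow> (\<exists>t::nat. \<forall>v\<in>V. \<exists>X. finite X \<and> card X \<le> t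
      \<and> (\<forall>x\<in>X. ancestor r par x v)
      \<and> (\<forall>x y. E x y \<and> \<not> layer_edge r par E x y \<and> ancestor r par v x \<and> \<not> ancestor r par v y
              \<longrightarrow> y \<in> X))"

text \<open>red edge between parts P, P' (parts are subsets of S, so E restricted to them is E[S])\<close>
definition red_edge :: "('a \<Rightarrow> 'a \<Rightarrow> bool) \<Rightarrow> 'a set \<Rightarrow> 'a set \<Rightarrow> bool" where
  "red_edge E P P' \<longleftrightarrow> P \<noteq> P' \<and>
     (\<exists>u\<in>P. \<exists>v\<in>P. \<exists>u'\<in>P'. \<exists>v'\<in>P'. E u u' \<and> \<not> E v v')"

definition red_maxdeg_le :: "('a \<Rightarrow> 'a \<Rightarrow> bool) \<Rightarrow> 'a set set \<Rightarrow> nat \<Rightarrow> bool" where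
  "red_maxdeg_le E \<P> d \<longleftrightarrow> (\<forall>P\<in>\<P>. card {P'\<in>\<P>. red_edge E P P'} \<le> d)"

text \<open>partition sequence P_n, ..., P_1 with n = card S, given as a function of the index\<close>
definition partition_sequence :: "'a set \<Rightarrow> (nat \<Rightarrow> 'a set set) \<Rightarrow> bool" where
  "partition_sequence S Q \<longleftrightarrow>
     Q (card S) = {{x} | x. x \<in> S} \<and>
     (\<forall>i. 1 \<le> i \<and> i < card S \<longrightarrow>
        (\<exists>A\<in>Q (Suc i). \<exists>B\<in>Q (Suc i). A \<noteq> B \<and> Q i = insert (A \<union> B) (Q (Suc i) - {A, B})))"

definition twin_width :: "('a \<Rightarrow> 'a \<Rightarrow> bool) \<Rightarrow> 'a set \<Rightarrow> nat" where
  "twin_width E S = (LEAST d. \<exists>Q. partition_sequence S Q \<and>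
      (\<forall>i. 1 \<le> i \<and> i \<le> card S \<longrightarrow> red_maxdeg_le E (Q i) d))"

end

theory Submission
  imports Defs "HOL-Library.Disjoint_Sets"
begin

text \<open>The contraction sequence of a finite \<open>S \<subseteq> V\<close> works upwards through the tree, one layer
  vertex at a time. At each stage the vertices below a frontier are grouped into blocks,
  subtrees whose intersections with the next layer are intervals, and each block is split into
  classes according to its neighbourhood among the vertices above the frontier. Upward
  restriction lets a block see at most \<open>t + 3\<close> vertices above it (the restriction set of its
  root, the root and its two layer neighbours), so a block has at most \<open>2 ^ (t + 3)\<close> classes.
  Non-layer edges never join distinct blocks and layer edges only join neighbouring blocks, so
  every red edge stays within three blocks and the red degree is at most \<open>3 * 2 ^ (t + 3)\<close>.
  Advancing the frontier by one vertex merges two blocks; each new class is the union of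
  boundedly many old ones, and such a coarsening can be realised by pairwise merges that keep
  the red degree bounded.\<close>

section \<open>Merge sequences of bounded red degree\<close>

definition merge_step :: "'a set set \<Rightarrow> 'a set set \<Rightarrow> bool" where
  "merge_step X Y \<longleftrightarrow> (\<exists>A\<in>X. \<exists>B\<in>X. A \<noteq> B \<and> Y = insert (A \<union> B) (X - {A, B}))"

inductive red_merges :: "('a \<Rightarrow> 'a \<Rightarrow> bool) \<Rightarrow> nat \<Rightarrow> 'a set set \<Rightarrow> 'a set set \<Rightarrow> bool"
  for E :: "'a \<Rightarrow> 'a \<Rightarrow> bool" and d :: nat where
  refl: "red_maxdeg_le E X d \<Longrightarrow> red_merges E d X X"
| step: "merge_step X Y \<Longrightarrow> red_maxdeg_le E X d \<Longrightarrow> red_merges E d Y Z \<Longrightarrow> red_merges E d X Z"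

lemma red_merges_trans: "red_merges E d X Y \<Longrightarrow> red_merges E d Y Z \<Longrightarrow> red_merges E d X Z"
  by (induction rule: red_merges.induct) (auto intro: red_merges.step)

lemma red_maxdeg_le_mono: "red_maxdeg_le E X d \<Longrightarrow> d \<le> d' \<Longrightarrow> red_maxdeg_le E X d'"
  unfolding red_maxdeg_le_def using le_trans by blast

lemma partition_on_merge_step:
  assumes S: "finite S" and X: "partition_on S X" and A: "A \<in> X" and B: "B \<in> X" "A \<noteq> B"
  shows "partition_on S (insert (A \<union> B) (X - {A, B}))"
    and "card X = Suc (card (insert (A \<union> B) (X - {A, B})))"
proof -
  have disj: "disjnt C D" if "C \<in> X" "D \<in> X" "C \<noteq> D" for C D
    using partition_onD2[OF X] that by (rule pairwiseD)
  have ne: "{} \<notin> X" using X by (rule partition_onD3)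
  have new: "A \<union> B \<notin> X - {A, B}"
  proof
    assume "A \<union> B \<in> X - {A, B}"
    then have "disjnt (A \<union> B) A" using disj A by blast
    then show False using A ne by (auto simp: disjnt_def)
  qed
  show "partition_on S (insert (A \<union> B) (X - {A, B}))"
  proof (rule partition_onI)
    show "\<Union> (insert (A \<union> B) (X - {A, B})) = S"
      using partition_onD1[OF X] A B by blast
    show "disjnt p q" if p: "p \<in> insert (A \<union> B) (X - {A, B})"
      and q: "q \<in> insert (A \<union> B) (X - {A, B})" and "p \<noteq> q" for p q
    proof -
      have "disjnt C (A \<union> B)" if "C \<in> X - {A, B}" for C
        using disj[of C A] disj[of C B] that A B by (simp add: disjnt_Un2)
      then show ?thesis
        using p q \<open>p \<noteq> q\<close> disj disjnt_sym by (metis Diff_iff insert_iff)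
    qed
    show "{} \<notin> insert (A \<union> B) (X - {A, B})"
      using ne A by auto
  qed
  have "finite X" using finite_elements[OF S X] .
  moreover have "card (X - {A, B}) = card X - 2" using calculation A B by (simp add: card_Diff_subset)
  moreover have "2 \<le> card X" using calculation A B card_mono[of X "{A, B}"] by simp
  ultimately show "card X = Suc (card (insert (A \<union> B) (X - {A, B})))"
    using new by simp
qed

lemma partition_on_merge_stepD:
  assumes "finite S" "partition_on S X" "merge_step X Y"
  shows "partition_on S Y \<and> card X = Suc (card Y)"
  using assms partition_on_merge_step unfolding merge_step_def by blast

text \<open>Index the partitions of a merge sequence by their number of parts, as
  partition_sequence does.\<close>

lemma red_merges_indexed:
  assumes S: "finite S" and "red_merges E d X Y" and "partition_on S X"
  shows "card Y \<le> card X \<and> (\<exists>Q. Q (card X) = X \<and> Q (card Y) = Y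
    \<and> (\<forall>i. card Y \<le> i \<and> i < card X \<longrightarrow> merge_step (Q (Suc i)) (Q i))
    \<and> (\<forall>i. card Y \<le> i \<and> i \<le> card X \<longrightarrow> red_maxdeg_le E (Q i) d))"
  using assms(2,3)
proof (induction rule: red_merges.induct)
  case (refl X)
  then show ?case by (intro conjI exI[of _ "\<lambda>_. X"]) auto
next
  case (step X Y Z)
  have Y: "partition_on S Y" and XY: "card X = Suc (card Y)"
    using partition_on_merge_stepD[OF S step.prems step.hyps(1)] by auto
  obtain Q where Q: "Q (card Y) = Y" "Q (card Z) = Z"
    "\<forall>i. card Z \<le> i \<and> i < card Y \<longrightarrow> merge_step (Q (Suc i)) (Q i)"
    "\<forall>i. card Z \<le> i \<and> i \<le> card Y \<longrightarrow> red_maxdeg_le E (Q i) d"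
    and ZY: "card Z \<le> card Y"
    using step.IH[OF Y] by blast
  show ?case
    using Q ZY XY step.hyps(1,2) by (intro conjI exI[of _ "Q(card X := X)"]) (auto simp: less_Suc_eq le_Suc_eq)
qed

lemma twin_width_empty: "twin_width E {} = 0"
  unfolding twin_width_def
  by (intro Least_eq_0 exI[of _ "\<lambda>_. {}"]) (simp add: partition_sequence_def)

lemma twin_width_le_if_red_merges:
  assumes S: "finite S" and merges: "red_merges E d ((\<lambda>x. {x}) ` S) {S}"
  shows "twin_width E S \<le> d"
proof -
  have card_singletons: "card ((\<lambda>x. {x}) ` S) = card S"
    by (simp add: card_image)
  obtain Q where Q: "Q (card S) = (\<lambda>x. {x}) ` S"
    "\<forall>i. 1 \<le> i \<and> i < card S \<longrightarrow> merge_step (Q (Suc i)) (Q i)"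
    "\<forall>i. 1 \<le> i \<and> i \<le> card S \<longrightarrow> red_maxdeg_le E (Q i) d"
    using red_merges_indexed[OF S merges partition_on_singletons]
    unfolding card_singletons by (elim conjE exE) simp
  have "partition_sequence S Q"
    unfolding partition_sequence_def
  proof (intro conjI allI impI)
    show "Q (card S) = {{x} |x. x \<in> S}" using Q(1) by blast
    show "\<exists>A\<in>Q (Suc i). \<exists>B\<in>Q (Suc i). A \<noteq> B \<and> Q i = insert (A \<union> B) (Q (Suc i) - {A, B})"
      if "1 \<le> i \<and> i < card S" for i
      using Q(2) that unfolding merge_step_def by blast
  qed
  then show ?thesis
    unfolding twin_width_def using Q(3) by (intro Least_le exI[of _ Q] conjI)
qed

lemma refines_eq_if_unique:
  assumes ref: "refines S B C" and uniq: "\<forall>c\<in>C. \<forall>b1\<in>B. \<forall>b2\<in>B. b1 \<subseteq> c \<longrightarrow> b2 \<subseteq> c \<longrightarrow> b1 = b2"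
  shows "B = C"
proof -
  have C_sub: "c \<in> B" if c: "c \<in> C" for c
  proof -
    have part: "partition_on c {b\<in>B. b \<subseteq> c}" using refines_obtains_subset[OF ref c] .
    have "c \<noteq> {}" using ref c unfolding refines_def partition_on_def by blast
    then obtain b where b: "b \<in> B" "b \<subseteq> c" using partition_onD1[OF part] by blast
    then have "{b'\<in>B. b' \<subseteq> c} = {b}" using uniq c by blast
    then show "c \<in> B" using partition_onD1[OF part] b by simp
  qed
  moreover have "b \<in> C" if b: "b \<in> B" for b
  proof -
    obtain c where "c \<in> C" "b \<subseteq> c" using ref b unfolding refines_def by blast
    then show ?thesis using uniq C_sub[of c] b by blast
  qed
  ultimately show ?thesis by blast
qed

lemma red_edge_mono: "red_edge E D D' \<Longrightarrow> D \<subseteq> C \<Longrightarrow> D' \<subseteq> C' \<Longrightarrow> C \<noteq> C' \<Longrightarrow> red_edge E C C'"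
  unfolding red_edge_def by blast

text \<open>Every red neighbour of a part of the finer partition lies inside the coarser part of
  that part or inside one of its at most \<open>d\<close> red neighbours.\<close>

lemma red_maxdeg_le_refinement:
  assumes S: "finite S" and ref: "refines S D C"
    and count: "\<forall>c\<in>C. card {x\<in>D. x \<subseteq> c} \<le> m" and red: "red_maxdeg_le E C d"
  shows "red_maxdeg_le E D (m * (d + 1))"
  unfolding red_maxdeg_le_def
proof
  fix x assume x: "x \<in> D"
  obtain c where c: "c \<in> C" "x \<subseteq> c" using ref x unfolding refines_def by blast
  have fin: "finite C" "finite D"
    using finite_elements[OF S] ref unfolding refines_def by blast+
  define I where "I = insert c {c'\<in>C. red_edge E c c'}"
  have fin_I: "finite I" unfolding I_def using fin by simp
  have "{x'\<in>D. red_edge E x x'} \<subseteq> (\<Union>c'\<in>I. {y\<in>D. y \<subseteq> c'})"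
  proof
    fix x' assume x': "x' \<in> {x'\<in>D. red_edge E x x'}"
    obtain c' where c': "c' \<in> C" "x' \<subseteq> c'" using ref x' unfolding refines_def by blast
    then have "c' \<in> I" using red_edge_mono[of E x x' c c'] x' c unfolding I_def by auto
    then show "x' \<in> (\<Union>c'\<in>I. {y\<in>D. y \<subseteq> c'})" using c' x' by auto
  qed
  then have "card {x'\<in>D. red_edge E x x'} \<le> card (\<Union>c'\<in>I. {y\<in>D. y \<subseteq> c'})"
    using fin fin_I by (intro card_mono) auto
  also have "\<dots> \<le> (\<Sum>c'\<in>I. card {y\<in>D. y \<subseteq> c'})"
    using fin_I by (rule card_UN_le)
  also have "\<dots> \<le> card I * m"
    using sum_bounded_above[of I "\<lambda>c'. card {y\<in>D. y \<subseteq> c'}" m] count c unfolding I_def by auto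
  also have "card I \<le> d + 1"
  proof -
    have "card I \<le> Suc (card {c'\<in>C. red_edge E c c'})"
      unfolding I_def using fin by (intro card_insert_le_m1) auto
    then show ?thesis using red c unfolding red_maxdeg_le_def by fastforce
  qed
  finally show "card {x'\<in>D. red_edge E x x'} \<le> m * (d + 1)"
    by (simp add: mult.commute)
qed

text \<open>Merge two fine parts of a common coarse part at a time: every intermediate partition
  is again a refinement of \<open>C\<close> with at most \<open>m\<close> parts inside each coarse part.\<close>

lemma red_merges_coarsening:
  assumes S: "finite S" and C: "red_maxdeg_le E C d"
  shows "refines S B C \<Longrightarrow> \<forall>c\<in>C. card {b\<in>B. b \<subseteq> c} \<le> m \<Longrightarrow> red_merges E (m * (d + 1)) B C"
proof (induction "card B" arbitrary: B rule: less_induct)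
  case less
  have red: "red_maxdeg_le E B (m * (d + 1))"
    using red_maxdeg_le_refinement[OF S less.prems C] .
  show ?case
  proof (cases "\<forall>c\<in>C. \<forall>b1\<in>B. \<forall>b2\<in>B. b1 \<subseteq> c \<longrightarrow> b2 \<subseteq> c \<longrightarrow> b1 = b2")
    case True
    then show ?thesis using refines_eq_if_unique[OF less.prems(1)] red red_merges.refl by metis
  next
    case False
    then obtain c b1 b2 where c: "c \<in> C" and b: "b1 \<in> B" "b2 \<in> B" "b1 \<subseteq> c" "b2 \<subseteq> c" "b1 \<noteq> b2"
      by blast
    define B' where "B' = insert (b1 \<union> b2) (B - {b1, b2})"
    have B: "partition_on S B" and fin: "finite B"
      using less.prems(1) finite_elements[OF S] unfolding refines_def by auto
    have B': "partition_on S B'" "card B = Suc (card B')"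
      using partition_on_merge_step[OF S B b(1,2,5)] unfolding B'_def by auto
    have ref': "refines S B' C"
      using less.prems(1) B'(1) b c unfolding refines_def B'_def by blast
    have "card {x\<in>B'. x \<subseteq> c'} \<le> m" if c': "c' \<in> C" for c'
    proof -
      let ?f = "\<lambda>x. if x = b1 \<union> b2 then b1 else x"
      have inj: "inj_on ?f {x\<in>B'. x \<subseteq> c'}" unfolding B'_def by (auto simp: inj_on_def)
      have "?f ` {x\<in>B'. x \<subseteq> c'} \<subseteq> {x\<in>B. x \<subseteq> c'}" unfolding B'_def using b by auto
      then have "card {x\<in>B'. x \<subseteq> c'} \<le> card {x\<in>B. x \<subseteq> c'}"
        using card_inj_on_le[OF inj] fin by simp
      then show ?thesis using less.prems(2) c' by fastforce
    qed
    then have "red_merges E (m * (d + 1)) B' C"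
      using less.hyps B'(2) ref' by simp
    moreover have "merge_step B B'" unfolding merge_step_def B'_def using b by blast
    ultimately show ?thesis using red by (blast intro: red_merges.step)
  qed
qed

section \<open>Partitions induced by a key\<close>

definition kernel_partition :: "'a set \<Rightarrow> ('a \<Rightarrow> 'k) \<Rightarrow> 'a set set" where
  "kernel_partition S f = (\<lambda>u. {x\<in>S. f x = f u}) ` S"

lemma kernel_partitionE:
  assumes "P \<in> kernel_partition S f"
  obtains u where "u \<in> S" "P = {x\<in>S. f x = f u}"
  using assms unfolding kernel_partition_def by auto

lemma kernel_class_in_kernel_partition: "u \<in> S \<Longrightarrow> {x\<in>S. f x = f u} \<in> kernel_partition S f"
  unfolding kernel_partition_def by (rule imageI)

lemma partition_on_kernel_partition: "partition_on S (kernel_partition S f)"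
  by (rule partition_onI) (auto simp: kernel_partition_def disjnt_def)

lemma kernel_partition_cong: "(\<And>x. x \<in> S \<Longrightarrow> f x = g x) \<Longrightarrow> kernel_partition S f = kernel_partition S g"
  unfolding kernel_partition_def by (intro image_cong refl) auto

lemma refines_kernel_partition:
  assumes "\<And>x y. x \<in> S \<Longrightarrow> y \<in> S \<Longrightarrow> f x = f y \<Longrightarrow> g x = g y"
  shows "refines S (kernel_partition S f) (kernel_partition S g)"
  unfolding refines_def
proof (intro conjI ballI partition_on_kernel_partition)
  fix b assume "b \<in> kernel_partition S f"
  then obtain u where u: "u \<in> S" "b = {x\<in>S. f x = f u}" by (rule kernel_partitionE)
  have "b \<subseteq> {x\<in>S. g x = g u}" unfolding u(2) using assms u(1) by blast
  then show "\<exists>c\<in>kernel_partition S g. b \<subseteq> c"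
    using kernel_class_in_kernel_partition[OF u(1)] by blast
qed

lemma card_kernel_classes_le:
  assumes "\<C> \<subseteq> kernel_partition S f" and "finite K"
    and "\<And>u. u \<in> S \<Longrightarrow> {x\<in>S. f x = f u} \<in> \<C> \<Longrightarrow> f u \<in> K"
  shows "card \<C> \<le> card K"
proof -
  have "\<C> \<subseteq> (\<lambda>\<kappa>. {x\<in>S. f x = \<kappa>}) ` K"
  proof
    fix C assume C: "C \<in> \<C>"
    then obtain u where "u \<in> S" "C = {x\<in>S. f x = f u}"
      using assms(1) by (blast elim: kernel_partitionE)
    then show "C \<in> (\<lambda>\<kappa>. {x\<in>S. f x = \<kappa>}) ` K" using assms(3) C by blast
  qed
  then have "card \<C> \<le> card ((\<lambda>\<kappa>. {x\<in>S. f x = \<kappa>}) ` K)"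
    using assms(2) by (intro card_mono) auto
  also have "\<dots> \<le> card K" using assms(2) by (rule card_image_le)
  finally show ?thesis .
qed

lemma card_kernel_classes_within:
  assumes "u \<in> S" and "f ` {x\<in>S. g x = g u} \<subseteq> K" and "finite K"
  shows "card {b\<in>kernel_partition S f. b \<subseteq> {x\<in>S. g x = g u}} \<le> card K"
proof (rule card_kernel_classes_le)
  fix v assume "v \<in> S" "{x\<in>S. f x = f v} \<in> {b\<in>kernel_partition S f. b \<subseteq> {x\<in>S. g x = g u}}"
  then have "v \<in> {x\<in>S. g x = g u}" by blast
  then show "f v \<in> K" using assms(2) by blast
qed (use assms(3) in auto)

lemma red_maxdeg_le_kernel_partition:
  assumes "\<And>u. u \<in> S \<Longrightarrow> \<exists>K. finite K \<and> card K \<le> m \<and>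
    (\<forall>u'\<in>S. red_edge E {x\<in>S. f x = f u} {x\<in>S. f x = f u'} \<longrightarrow> f u' \<in> K)"
  shows "red_maxdeg_le E (kernel_partition S f) m"
  unfolding red_maxdeg_le_def
proof
  fix P assume "P \<in> kernel_partition S f"
  then obtain u where u: "u \<in> S" "P = {x\<in>S. f x = f u}" by (rule kernel_partitionE)
  obtain K where K: "finite K" "card K \<le> m"
    "\<forall>u'\<in>S. red_edge E {x\<in>S. f x = f u} {x\<in>S. f x = f u'} \<longrightarrow> f u' \<in> K"
    using assms[OF u(1)] by blast
  have "card {P'\<in>kernel_partition S f. red_edge E P P'} \<le> card K"
    using K(1,3) unfolding u(2) by (intro card_kernel_classes_le) auto
  then show "card {P'\<in>kernel_partition S f. red_edge E P P'} \<le> m" using K(2) by simp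
qed

lemma card_Sigma_Pow_le:
  assumes "finite I" and "\<And>b. b \<in> I \<Longrightarrow> finite (R b) \<and> card (R b) \<le> s"
  shows "finite (Sigma I (\<lambda>b. Pow (R b))) \<and> card (Sigma I (\<lambda>b. Pow (R b))) \<le> card I * 2 ^ s"
proof
  show "finite (Sigma I (\<lambda>b. Pow (R b)))" using assms by auto
  have "card (Sigma I (\<lambda>b. Pow (R b))) = (\<Sum>b\<in>I. 2 ^ card (R b))"
    using assms by (simp add: card_SigmaI card_Pow)
  also have "\<dots> \<le> (\<Sum>b\<in>I. 2 ^ s)"
    using assms(2) by (intro sum_mono power_increasing) auto
  finally show "card (Sigma I (\<lambda>b. Pow (R b))) \<le> card I * 2 ^ s" by simp
qed

section \<open>Rooted plane trees\<close>

locale rooted_parent_tree =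
  fixes V :: "'a set" and r :: 'a and par :: "'a \<Rightarrow> 'a"
  assumes rooted: "rooted_tree V r par"
begin

abbreviation "dep \<equiv> depth r par"
abbreviation "anc \<equiv> ancestor r par"
abbreviation "L \<equiv> layer V r par"

lemma par_in_V: "v \<in> V \<Longrightarrow> v \<noteq> r \<Longrightarrow> par v \<in> V"
  using rooted unfolding rooted_tree_def by blast

lemma funpow_depth_root:
  assumes "v \<in> V" shows "(par ^^ dep v) v = r"
proof -
  have "\<exists>n. (par ^^ n) v = r" using rooted assms unfolding rooted_tree_def by blast
  then show ?thesis unfolding depth_def by (rule LeastI_ex)
qed

lemma depth_le: "(par ^^ n) v = r \<Longrightarrow> dep v \<le> n"
  unfolding depth_def by (rule Least_le)

lemma depth_root: "dep r = 0"
  unfolding depth_def by simp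

lemma depth_eq_0: "v \<in> V \<Longrightarrow> dep v = 0 \<Longrightarrow> v = r"
  using funpow_depth_root by fastforce

lemma depth_par: assumes v: "v \<in> V" "v \<noteq> r" shows "dep v = Suc (dep (par v))"
proof -
  obtain k where k: "dep v = Suc k"
    using funpow_depth_root[OF v(1)] v(2) by (cases "dep v") auto
  have "(par ^^ k) (par v) = r"
    using funpow_depth_root[OF v(1)] k by (simp add: funpow_Suc_right del: funpow.simps)
  then have "dep (par v) \<le> k" by (rule depth_le)
  moreover have "(par ^^ Suc (dep (par v))) v = r"
    using funpow_depth_root[OF par_in_V[OF v]] by (simp add: funpow_Suc_right del: funpow.simps)
  then have "dep v \<le> Suc (dep (par v))" by (rule depth_le)
  ultimately show ?thesis using k by simp
qed

lemma funpow_par_in_V: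
  "v \<in> V \<Longrightarrow> i \<le> dep v \<Longrightarrow> (par ^^ i) v \<in> V \<and> dep ((par ^^ i) v) = dep v - i"
proof (induction i)
  case (Suc i)
  then have w: "(par ^^ i) v \<in> V" "dep ((par ^^ i) v) = dep v - i" by auto
  have "(par ^^ i) v \<noteq> r" using w(2) Suc.prems depth_root by auto
  then show ?case using par_in_V depth_par w by auto
qed simp

lemma layer_iff: "x \<in> L n \<longleftrightarrow> x \<in> V \<and> dep x = n"
  unfolding layer_def by simp

lemma children_iff: "c \<in> children V r par x \<longleftrightarrow> c \<in> V \<and> c \<noteq> r \<and> par c = x"
  unfolding children_def by simp

lemma depth_child: "c \<in> children V r par x \<Longrightarrow> dep c = Suc (dep x)"
  using children_iff depth_par by auto

definition ancestor_at :: "'a \<Rightarrow> nat \<Rightarrow> 'a" where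
  "ancestor_at v l = (par ^^ (dep v - l)) v"

lemma ancestor_at_in_V: "v \<in> V \<Longrightarrow> l \<le> dep v \<Longrightarrow> ancestor_at v l \<in> V \<and> dep (ancestor_at v l) = l"
  unfolding ancestor_at_def using funpow_par_in_V[of v "dep v - l"] by simp

lemma ancestor_at_self [simp]: "dep v = l \<Longrightarrow> ancestor_at v l = v"
  unfolding ancestor_at_def by simp

lemma ancestor_iff:
  assumes "v \<in> V" shows "anc u v \<longleftrightarrow> dep u \<le> dep v \<and> ancestor_at v (dep u) = u"
proof
  assume "anc u v"
  then obtain n where n: "n \<le> dep v" "(par ^^ n) v = u" unfolding ancestor_def by blast
  then have "dep u = dep v - n" using funpow_par_in_V[OF assms] by blast
  then show "dep u \<le> dep v \<and> ancestor_at v (dep u) = u"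
    using n unfolding ancestor_at_def by (simp add: diff_diff_cancel)
next
  assume "dep u \<le> dep v \<and> ancestor_at v (dep u) = u"
  then show "anc u v" unfolding ancestor_def ancestor_at_def by (intro exI[of _ "dep v - dep u"]) simp
qed

lemma ancestor_refl: "v \<in> V \<Longrightarrow> anc v v"
  using ancestor_iff by simp

lemma ancestor_depth_le: "v \<in> V \<Longrightarrow> anc u v \<Longrightarrow> dep u \<le> dep v"
  using ancestor_iff by blast

lemma ancestor_same_depth: "v \<in> V \<Longrightarrow> anc u v \<Longrightarrow> dep u = dep v \<Longrightarrow> u = v"
  using ancestor_iff by fastforce

lemma ancestor_ancestor_at: "v \<in> V \<Longrightarrow> l \<le> dep v \<Longrightarrow> anc (ancestor_at v l) v"
  using ancestor_iff ancestor_at_in_V by simp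

lemma ancestor_at_ancestor_at:
  assumes "v \<in> V" "l \<le> m" "m \<le> dep v"
  shows "ancestor_at (ancestor_at v m) l = ancestor_at v l"
proof -
  have "ancestor_at (ancestor_at v m) l = (par ^^ ((m - l) + (dep v - m))) v"
    using ancestor_at_in_V[OF assms(1,3)] unfolding ancestor_at_def by (simp add: funpow_add)
  also have "(m - l) + (dep v - m) = dep v - l" using assms by simp
  finally show ?thesis unfolding ancestor_at_def .
qed

lemma ancestor_at_of_ancestor:
  "v \<in> V \<Longrightarrow> anc u v \<Longrightarrow> l \<le> dep u \<Longrightarrow> ancestor_at u l = ancestor_at v l"
  using ancestor_iff ancestor_at_ancestor_at by metis

lemma par_ancestor_at:
  assumes "Suc l \<le> dep v" shows "par (ancestor_at v (Suc l)) = ancestor_at v l"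
proof -
  have "dep v - l = Suc (dep v - Suc l)" using assms by simp
  then show ?thesis unfolding ancestor_at_def by simp
qed

lemma ancestor_par: "v \<in> V \<Longrightarrow> v \<noteq> r \<Longrightarrow> anc (par v) v"
  unfolding ancestor_def using depth_par by (intro exI[of _ "Suc 0"]) simp

lemma ancestor_at_par: "v \<in> V \<Longrightarrow> v \<noteq> r \<Longrightarrow> l \<le> dep (par v) \<Longrightarrow> ancestor_at (par v) l = ancestor_at v l"
  using ancestor_at_of_ancestor ancestor_par by blast

end

locale neat_plane_tree = rooted_parent_tree +
  fixes lt :: "'a \<Rightarrow> 'a \<Rightarrow> bool"
  assumes plane: "plane_order V r par lt"
    and finite_layer: "finite (layer V r par n)"
    and neat: "neat V r par"
begin

abbreviation "consec \<equiv> consecutive lt"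

lemma lt_layer: "lt u v \<Longrightarrow> u \<in> V \<and> v \<in> V \<and> dep u = dep v"
  using plane unfolding plane_order_def by blast

lemma lt_irrefl: "\<not> lt u u"
  using plane unfolding plane_order_def by blast

lemma lt_trans: "lt u v \<Longrightarrow> lt v w \<Longrightarrow> lt u w"
  using plane unfolding plane_order_def by blast

lemma lt_asym: "lt u v \<Longrightarrow> \<not> lt v u"
  using lt_trans lt_irrefl by blast

lemma lt_total: "u \<in> V \<Longrightarrow> v \<in> V \<Longrightarrow> dep u = dep v \<Longrightarrow> u = v \<or> lt u v \<or> lt v u"
  using plane unfolding plane_order_def by blast

lemma lt_par: "u \<in> V \<Longrightarrow> v \<in> V \<Longrightarrow> u \<noteq> r \<Longrightarrow> v \<noteq> r \<Longrightarrow> lt (par u) (par v) \<Longrightarrow> lt u v"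
  using plane unfolding plane_order_def by blast

lemma ex_leftmost:
  assumes "finite A" "A \<noteq> {}"
  obtains w where "w \<in> A" "\<forall>b\<in>A. \<not> lt b w"
proof -
  have "asymp_on A lt" "transp_on A lt" using lt_asym lt_trans by (blast intro: asymp_onI transp_onI)+
  then obtain w where "w \<in> A" "\<forall>b\<in>A. b \<noteq> w \<longrightarrow> \<not> lt b w"
    using Finite_Set.bex_min_element[OF assms(1) _ _ assms(2)] by blast
  then show ?thesis using lt_irrefl by (intro that[of w]) auto
qed

lemma ex_rightmost:
  assumes "finite A" "A \<noteq> {}"
  obtains w where "w \<in> A" "\<forall>b\<in>A. \<not> lt w b"
proof -
  have "asymp_on A lt" "transp_on A lt" using lt_asym lt_trans by (blast intro: asymp_onI transp_onI)+
  then obtain w where "w \<in> A" "\<forall>b\<in>A. b \<noteq> w \<longrightarrow> \<not> lt w b"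
    using Finite_Set.bex_max_element[OF assms(1) _ _ assms(2)] by blast
  then show ?thesis using lt_irrefl by (intro that[of w]) auto
qed

lemma consecutive_lt: "consec u v \<Longrightarrow> lt u v"
  unfolding consecutive_def by blast

lemma consecutiveD: "consec u v \<Longrightarrow> lt u w \<Longrightarrow> lt w v \<Longrightarrow> False"
  unfolding consecutive_def by blast

lemma consecutiveI: "lt u v \<Longrightarrow> (\<And>w. lt u w \<Longrightarrow> lt w v \<Longrightarrow> False) \<Longrightarrow> consec u v"
  unfolding consecutive_def by blast

lemma consecutive_unique_right:
  assumes "consec a b" "consec a b'" shows "b = b'"
proof -
  have "lt a b" "lt a b'" using assms consecutive_lt by auto
  then have "b \<in> V" "b' \<in> V" "dep b = dep b'" using lt_layer by metis+
  then have "b = b' \<or> lt b b' \<or> lt b' b" by (rule lt_total)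
  then show ?thesis using assms consecutiveD \<open>lt a b\<close> \<open>lt a b'\<close> by blast
qed

lemma consecutive_unique_left:
  assumes "consec b a" "consec b' a" shows "b = b'"
proof -
  have "lt b a" "lt b' a" using assms consecutive_lt by auto
  then have "b \<in> V" "b' \<in> V" "dep b = dep b'" using lt_layer by metis+
  then have "b = b' \<or> lt b b' \<or> lt b' b" by (rule lt_total)
  then show ?thesis using assms consecutiveD \<open>lt b a\<close> \<open>lt b' a\<close> by blast
qed

lemma children_nonempty: "x \<in> V \<Longrightarrow> children V r par x \<noteq> {}"
  using neat unfolding neat_def by blast

lemma lt_if_lt_ancestor_at:
  assumes "x \<in> V" "y \<in> V" "dep x = dep y" "l \<le> dep x" "lt (ancestor_at x l) (ancestor_at y l)"
  shows "lt x y"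
  using assms
proof (induction "dep x - l" arbitrary: x y)
  case 0
  then show ?case by (metis ancestor_at_self diff_is_0_eq le_antisym)
next
  case (Suc n)
  have nr: "x \<noteq> r" "y \<noteq> r" using Suc.hyps Suc.prems depth_root by auto
  have "lt (par x) (par y)"
  proof (rule Suc.hyps(1))
    show "n = dep (par x) - l" "dep (par x) = dep (par y)" "l \<le> dep (par x)"
      using Suc.hyps Suc.prems depth_par nr by auto
    then show "lt (ancestor_at (par x) l) (ancestor_at (par y) l)"
      using Suc.prems ancestor_at_par nr by auto
  qed (use Suc.prems par_in_V nr in auto)
  then show ?case using lt_par Suc.prems nr by blast
qed

lemma ex_descendant_at_depth:
  "a \<in> V \<Longrightarrow> dep a \<le> m \<Longrightarrow> \<exists>x. x \<in> V \<and> dep x = m \<and> anc a x"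
proof (induction m)
  case 0
  then show ?case using ancestor_refl by auto
next
  case (Suc m)
  show ?case
  proof (cases "dep a = Suc m")
    case True
    then show ?thesis using Suc.prems ancestor_refl by auto
  next
    case False
    then obtain x where x: "x \<in> V" "dep x = m" "anc a x" using Suc by auto
    obtain c where c: "c \<in> V" "c \<noteq> r" "par c = x"
      using children_nonempty[OF x(1)] children_iff by blast
    have dc: "dep c = Suc m" using depth_par[OF c(1,2)] c(3) x(2) by simp
    have "dep a \<le> m" using Suc.prems False by simp
    then have "ancestor_at c (dep a) = ancestor_at x (dep a)"
      using ancestor_at_par[OF c(1,2)] c(3) x(2) by simp
    also have "\<dots> = a" using ancestor_iff[OF x(1)] x(3) by simp
    finally have "anc a c" using ancestor_iff[OF c(1)] dc \<open>dep a \<le> m\<close> by simp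
    then show ?thesis using c dc by blast
  qed
qed

lemma consecutive_ancestors:
  assumes x: "x \<in> V" "y \<in> V" "dep x = dep y" "l \<le> dep x"
    and xy: "consec x y" "ancestor_at x l \<noteq> ancestor_at y l"
  shows "consec (ancestor_at x l) (ancestor_at y l)"
proof -
  have a: "ancestor_at x l \<in> V" "dep (ancestor_at x l) = l"
    "ancestor_at y l \<in> V" "dep (ancestor_at y l) = l"
    using ancestor_at_in_V x by auto
  have "\<not> lt (ancestor_at y l) (ancestor_at x l)"
    using lt_if_lt_ancestor_at[of y x l] x consecutive_lt[OF xy(1)] lt_asym by auto
  then have lt_anc: "lt (ancestor_at x l) (ancestor_at y l)" using lt_total a xy(2) by metis
  show ?thesis
  proof (rule consecutiveI[OF lt_anc])
    fix z assume z: "lt (ancestor_at x l) z" "lt z (ancestor_at y l)"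
    then have zV: "z \<in> V" "dep z = l" using lt_layer a by auto
    obtain z' where z': "z' \<in> V" "dep z' = dep x" "anc z z'"
      using ex_descendant_at_depth[OF zV(1)] zV(2) x(4) by auto
    have "ancestor_at z' l = z" using ancestor_iff[OF z'(1)] z'(3) zV(2) by simp
    then have "lt x z'" "lt z' y"
      using lt_if_lt_ancestor_at[OF x(1) z'(1)] lt_if_lt_ancestor_at[OF z'(1) x(2)] z' x z by auto
    then show False using consecutiveD[OF xy(1)] by blast
  qed
qed

lemma ex_rightmost_descendant:
  assumes "a \<in> V" "dep a \<le> m"
  obtains x where "x \<in> L m" "ancestor_at x (dep a) = a"
    "\<forall>z\<in>L m. ancestor_at z (dep a) = a \<longrightarrow> \<not> lt x z"
proof -
  define D where "D = {x \<in> L m. ancestor_at x (dep a) = a}"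
  obtain x0 where "x0 \<in> V" "dep x0 = m" "anc a x0" using ex_descendant_at_depth[OF assms] by blast
  then have "x0 \<in> D" unfolding D_def using ancestor_iff layer_iff by simp
  moreover have "finite D" unfolding D_def using finite_layer by simp
  ultimately obtain x where "x \<in> D" "\<forall>z\<in>D. \<not> lt x z" using ex_rightmost by blast
  then show ?thesis using that unfolding D_def by blast
qed

lemma ex_consecutive_right:
  assumes "x \<in> L m" "y \<in> L m" "lt x y"
  obtains z where "z \<in> L m" "consec x z"
proof -
  define G where "G = {y \<in> L m. lt x y}"
  have "y \<in> G" "finite G" unfolding G_def using assms finite_layer by simp_all
  then obtain z where z: "z \<in> G" "\<forall>y\<in>G. \<not> lt y z" using ex_leftmost by blast
  have "consec x z"
  proof (rule consecutiveI)
    show "lt x z" using z(1) unfolding G_def by simp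
    show False if "lt x w" "lt w z" for w
      using that z lt_layer[OF that(1)] assms(1) layer_iff unfolding G_def by auto
  qed
  then show ?thesis using that z(1) unfolding G_def by blast
qed

text \<open>Witnesses: the rightmost descendant of \<open>a\<close> at depth \<open>m\<close> and its right neighbour,
  which is a descendant of \<open>b\<close> because descendants of \<open>b\<close> exist at every depth.\<close>

lemma consecutive_descendants:
  assumes ab: "consec a b" and m: "dep a \<le> m"
  obtains x y where "x \<in> L m" "y \<in> L m" "ancestor_at x (dep a) = a" "ancestor_at y (dep a) = b"
    "consec x y"
proof -
  have lab: "lt a b" using consecutive_lt[OF ab] .
  have abV: "a \<in> V" "b \<in> V" "dep a = dep b" using lt_layer[OF lab] by auto
  obtain x where x: "x \<in> L m" "ancestor_at x (dep a) = a"
    and rightmost: "\<forall>z\<in>L m. ancestor_at z (dep a) = a \<longrightarrow> \<not> lt x z"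
    using ex_rightmost_descendant[OF abV(1) m] by blast
  obtain y0 where y0: "y0 \<in> V" "dep y0 = m" "anc b y0"
    using ex_descendant_at_depth[OF abV(2)] m abV(3) by metis
  have "ancestor_at y0 (dep a) = b" using ancestor_iff[OF y0(1)] y0(3) abV(3) by simp
  then have "lt x y0"
    using lt_if_lt_ancestor_at[of x y0 "dep a"] x y0 lab m layer_iff by simp
  then obtain y where y: "y \<in> L m" "consec x y"
    using ex_consecutive_right x(1) y0 layer_iff by blast
  define c where "c = ancestor_at y (dep a)"
  have c: "c \<in> V" "dep c = dep a" using ancestor_at_in_V[of y "dep a"] y(1) m layer_iff c_def by auto
  have "c \<noteq> a"
  proof
    assume "c = a"
    then have "ancestor_at y (dep a) = a" using c_def by simp
    then show False using rightmost y(1) consecutive_lt[OF y(2)] by blast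
  qed
  moreover have "\<not> lt c a"
    using lt_if_lt_ancestor_at[of y x "dep a"] x y m layer_iff c_def consecutive_lt lt_asym by auto
  ultimately have "lt a c" using lt_total[OF abV(1) c(1)] c by metis
  have "c = b"
  proof (rule ccontr)
    assume "c \<noteq> b"
    moreover have "\<not> lt c b" using consecutiveD[OF ab \<open>lt a c\<close>] by blast
    ultimately have "lt b c" using lt_total[OF abV(2) c(1)] c abV(3) by metis
    then have "lt y0 y" using lt_if_lt_ancestor_at[of y0 y "dep a"] y0 y m layer_iff abV(3)
      \<open>ancestor_at y0 (dep a) = b\<close> c_def by simp
    then show False using consecutiveD[OF y(2) \<open>lt x y0\<close>] by blast
  qed
  then show ?thesis using that x y c_def by blast
qed

section \<open>Blocks\<close>

text \<open>The contraction sequence runs through stages \<open>(k, P)\<close>, where \<open>P\<close> is a prefix of the layer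
  \<open>L (Suc k)\<close>. A vertex is settled at stage \<open>(k, P)\<close> if it lies below layer \<open>k\<close>, or lies on
  layer \<open>k\<close> with all its children in \<open>P\<close>. The settled vertices form blocks: the subtrees of the
  vertices of \<open>L (Suc k) - P\<close> and of the settled vertices of layer \<open>k\<close>. \<open>block_root\<close> maps a
  settled vertex to the root of its block.\<close>

definition settled :: "nat \<Rightarrow> 'a set \<Rightarrow> 'a \<Rightarrow> bool" where
  "settled k P u \<longleftrightarrow> u \<in> V \<and> (k < dep u \<or> (dep u = k \<and> children V r par u \<subseteq> P))"

definition block_root :: "nat \<Rightarrow> 'a set \<Rightarrow> 'a \<Rightarrow> 'a" where
  "block_root k P u = (if dep u = k then u
     else if ancestor_at u (Suc k) \<in> P then par (ancestor_at u (Suc k)) else ancestor_at u (Suc k))"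

definition layer_prefix :: "nat \<Rightarrow> 'a set \<Rightarrow> bool" where
  "layer_prefix k P \<longleftrightarrow> P \<subseteq> L (Suc k) \<and> (\<forall>b c. lt b c \<longrightarrow> c \<in> P \<longrightarrow> b \<in> P)"

lemma settledD: "settled k P y \<Longrightarrow> y \<in> V \<and> k \<le> dep y"
  unfolding settled_def by auto

lemma settled_mono: "P \<subseteq> P' \<Longrightarrow> settled k P x \<Longrightarrow> settled k P' x"
  unfolding settled_def by blast

lemma settled_on_layer: "settled k P y \<Longrightarrow> dep y = k \<Longrightarrow> block_root k P y = y \<and> children V r par y \<subseteq> P"
  unfolding settled_def block_root_def by auto

lemma block_root_layer_in:
  assumes "w \<in> L (Suc k)" "w \<in> P"
  shows "block_root k P w = par w" "par w \<in> L k"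
proof -
  have w: "w \<in> V" "dep w = Suc k" "w \<noteq> r" using assms(1) layer_iff depth_root by auto
  then show "block_root k P w = par w" unfolding block_root_def using assms(2) by simp
  show "par w \<in> L k" using w par_in_V depth_par layer_iff by auto
qed

lemma block_root_layer_notin: "w \<in> L (Suc k) \<Longrightarrow> w \<notin> P \<Longrightarrow> block_root k P w = w"
  unfolding block_root_def using layer_iff by auto

lemma block_root_below:
  assumes "u \<in> V" "k < dep u"
  shows "block_root k P u = block_root k P (ancestor_at u (Suc k))"
  using assms ancestor_at_in_V[of u "Suc k"] unfolding block_root_def by auto

lemma block_root_ancestor:
  assumes "settled k P y"
  shows "anc (block_root k P y) y \<and> k \<le> dep (block_root k P y) \<and> block_root k P y \<in> V"
proof (cases "dep y = k")
  case True
  then show ?thesis using settled_on_layer[OF assms] settledD[OF assms] ancestor_refl by simp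
next
  case False
  then have y: "y \<in> V" "Suc k \<le> dep y" using settledD[OF assms] by auto
  then show ?thesis
    using ancestor_ancestor_at[OF y(1)] ancestor_at_in_V[OF y(1)] par_ancestor_at[OF y(2)] False
    unfolding block_root_def by auto
qed

lemma same_block_if_ancestor:
  assumes x: "settled k P x" and y: "settled k P y" and a: "anc x y" and d: "dep x < dep y"
  shows "block_root k P x = block_root k P y"
proof -
  have xV: "x \<in> V" "k \<le> dep x" and yV: "y \<in> V" "Suc k \<le> dep y"
    using settledD[OF x] settledD[OF y] d by auto
  define w where "w = ancestor_at y (Suc k)"
  have w: "w \<in> L (Suc k)" using ancestor_at_in_V[OF yV] layer_iff w_def by simp
  have by_w: "block_root k P y = block_root k P w"
    using block_root_below[OF yV(1)] yV(2) w_def by simp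
  show ?thesis
  proof (cases "dep x = k")
    case True
    have "ancestor_at y k = x" using ancestor_iff[OF yV(1)] a True by simp
    then have "par w = x" using par_ancestor_at[OF yV(2)] w_def by simp
    then have "w \<in> children V r par x" using w children_iff layer_iff depth_root by auto
    then have "w \<in> P" using settled_on_layer[OF x True] by blast
    then show ?thesis
      using by_w block_root_layer_in[OF w] settled_on_layer[OF x True] \<open>par w = x\<close> by simp
  next
    case False
    then have "ancestor_at x (Suc k) = w" using ancestor_at_of_ancestor[OF yV(1) a] xV w_def by simp
    then show ?thesis using block_root_below[OF xV(1)] xV(2) False by_w by simp
  qed
qed

lemma block_interval:
  assumes pre: "layer_prefix k P" and abc: "a \<in> L (Suc k)" "b \<in> L (Suc k)" "c \<in> L (Suc k)"
    and eq: "block_root k P a = block_root k P c" and ab: "lt a b" and bc: "lt b c"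
  shows "block_root k P b = block_root k P a"
proof (cases "a \<in> P")
  case True
  have V: "a \<in> V" "b \<in> V" "c \<in> V" "a \<noteq> r" "b \<noteq> r" "c \<noteq> r"
    using abc layer_iff depth_root by auto
  have "c \<in> P"
    using eq block_root_layer_in[OF abc(1) True] block_root_layer_notin[OF abc(3)] abc(3) layer_iff
    by (metis Suc_n_not_n)
  then have "b \<in> P" using pre bc unfolding layer_prefix_def by blast
  have pac: "par a = par c"
    using eq block_root_layer_in[OF abc(1) True] block_root_layer_in[OF abc(3) \<open>c \<in> P\<close>] by simp
  have "\<not> lt (par b) (par a)" using lt_par[OF V(2,1,5,4)] ab lt_asym by blast
  moreover have "\<not> lt (par a) (par b)" using lt_par[OF V(3,2,6,5)] bc lt_asym pac by metis
  moreover have "par a \<in> V" "par b \<in> V" "dep (par b) = dep (par a)"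
    using par_in_V V depth_par abc layer_iff by auto
  ultimately have "par b = par a" using lt_total by blast
  then show ?thesis
    using block_root_layer_in[OF abc(1) True] block_root_layer_in[OF abc(2) \<open>b \<in> P\<close>] by simp
next
  case False
  have "c = a"
  proof (cases "c \<in> P")
    case True
    then show ?thesis
      using eq block_root_layer_in[OF abc(3) True] block_root_layer_notin[OF abc(1) False] abc(1) layer_iff
      by (metis Suc_n_not_n)
  next
    case False
    then show ?thesis
      using eq block_root_layer_notin[OF abc(3)] block_root_layer_notin[OF abc(1) \<open>a \<notin> P\<close>] by simp
  qed
  then show ?thesis using ab bc lt_asym by blast
qed

lemma consecutive_blocks:
  assumes x: "settled k P x" and y: "settled k P y"
    and ne: "block_root k P x \<noteq> block_root k P y" and xy: "consec x y"
  obtains a b where "a \<in> L (Suc k)" "b \<in> L (Suc k)"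
    "block_root k P a = block_root k P x" "block_root k P b = block_root k P y" "consec a b"
proof -
  have xV: "x \<in> V" "k \<le> dep x" and yV: "y \<in> V" "k \<le> dep y" using settledD x y by auto
  have dxy: "dep x = dep y" using lt_layer[OF consecutive_lt[OF xy]] by simp
  show ?thesis
  proof (cases "dep x = k")
    case False
    then have d: "Suc k \<le> dep x" using xV by simp
    define a where "a = ancestor_at x (Suc k)"
    define b where "b = ancestor_at y (Suc k)"
    have ab: "a \<in> L (Suc k)" "b \<in> L (Suc k)"
      using ancestor_at_in_V[OF xV(1) d] ancestor_at_in_V[OF yV(1)] d dxy layer_iff a_def b_def by auto
    have roots: "block_root k P a = block_root k P x" "block_root k P b = block_root k P y"
      using block_root_below xV yV d dxy a_def b_def by auto
    then have "a \<noteq> b" using ne by auto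
    then have "consec a b"
      using consecutive_ancestors[OF xV(1) yV(1) dxy d xy] a_def b_def by simp
    then show ?thesis using that ab roots by blast
  next
    case True
    obtain a b where ab: "a \<in> L (Suc k)" "b \<in> L (Suc k)" "ancestor_at a k = x" "ancestor_at b k = y"
      "consec a b"
      using consecutive_descendants[OF xy, of "Suc k"] True by auto
    have "par a = x" "par b = y" using par_ancestor_at[of k a] par_ancestor_at[of k b] ab layer_iff by auto
    then have "a \<in> children V r par x" "b \<in> children V r par y"
      using ab children_iff layer_iff depth_root by auto
    then have "a \<in> P" "b \<in> P"
      using settled_on_layer[OF x True] settled_on_layer[OF y] True dxy by auto
    then have "block_root k P a = block_root k P x" "block_root k P b = block_root k P y"
      using block_root_layer_in ab \<open>par a = x\<close> \<open>par b = y\<close> settled_on_layer x y True dxy by auto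
    then show ?thesis using that ab by blast
  qed
qed

definition adjacent_blocks :: "nat \<Rightarrow> 'a set \<Rightarrow> 'a \<Rightarrow> 'a set" where
  "adjacent_blocks k P b = {block_root k P y | y. y \<in> L (Suc k) \<and> block_root k P y \<noteq> b \<and>
      (\<exists>a\<in>L (Suc k). block_root k P a = b \<and> (consec a y \<or> consec y a))}"

lemma block_exit_right:
  assumes pre: "layer_prefix k P" and L: "a \<in> L (Suc k)" "c \<in> L (Suc k)" "y \<in> L (Suc k)"
    and ca: "block_root k P c = block_root k P a" and ay: "consec a y"
    and ya: "block_root k P y \<noteq> block_root k P a"
  shows "\<not> lt a c"
proof
  assume ac: "lt a c"
  have "y \<noteq> c" using ca ya by auto
  moreover have "\<not> lt y c"
    using block_interval[OF pre L(1,3,2) ca[symmetric] consecutive_lt[OF ay]] ya by auto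
  moreover have "\<not> lt c y" using consecutiveD[OF ay ac] by blast
  moreover have "y \<in> V" "c \<in> V" "dep y = dep c" using L layer_iff by auto
  ultimately show False using lt_total by blast
qed

lemma block_exit_left:
  assumes pre: "layer_prefix k P" and L: "a \<in> L (Suc k)" "c \<in> L (Suc k)" "y \<in> L (Suc k)"
    and ca: "block_root k P c = block_root k P a" and ya: "consec y a"
    and ne: "block_root k P y \<noteq> block_root k P a"
  shows "\<not> lt c a"
proof
  assume ca': "lt c a"
  have "y \<noteq> c" using ca ne by auto
  moreover have "\<not> lt c y"
    using block_interval[OF pre L(2,3,1) ca _ consecutive_lt[OF ya]] ca ne by auto
  moreover have "\<not> lt y c" using consecutiveD[OF ya _ ca'] by blast
  moreover have "y \<in> V" "c \<in> V" "dep y = dep c" using L layer_iff by auto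
  ultimately show False using lt_total by blast
qed

lemma block_exit_right_unique:
  assumes pre: "layer_prefix k P" and a: "a1 \<in> L (Suc k)" "a2 \<in> L (Suc k)"
    and y: "y1 \<in> L (Suc k)" "y2 \<in> L (Suc k)" and roots: "block_root k P a1 = block_root k P a2"
    and exits: "consec a1 y1" "block_root k P y1 \<noteq> block_root k P a1"
      "consec a2 y2" "block_root k P y2 \<noteq> block_root k P a2"
  shows "y1 = y2"
proof -
  have "\<not> lt a1 a2" "\<not> lt a2 a1"
    using block_exit_right[OF pre a(1,2) y(1)] block_exit_right[OF pre a(2,1) y(2)] roots exits by auto
  moreover have "a1 \<in> V" "a2 \<in> V" "dep a1 = dep a2" using a layer_iff by auto
  ultimately have "a1 = a2" using lt_total by blast
  then show ?thesis using consecutive_unique_right exits(1,3) by blast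
qed

lemma block_exit_left_unique:
  assumes pre: "layer_prefix k P" and a: "a1 \<in> L (Suc k)" "a2 \<in> L (Suc k)"
    and y: "y1 \<in> L (Suc k)" "y2 \<in> L (Suc k)" and roots: "block_root k P a1 = block_root k P a2"
    and exits: "consec y1 a1" "block_root k P y1 \<noteq> block_root k P a1"
      "consec y2 a2" "block_root k P y2 \<noteq> block_root k P a2"
  shows "y1 = y2"
proof -
  have "\<not> lt a1 a2" "\<not> lt a2 a1"
    using block_exit_left[OF pre a(2,1) y(2)] block_exit_left[OF pre a(1,2) y(1)] roots exits by auto
  moreover have "a1 \<in> V" "a2 \<in> V" "dep a1 = dep a2" using a layer_iff by auto
  ultimately have "a1 = a2" using lt_total by blast
  then show ?thesis using consecutive_unique_left exits(1,3) by blast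
qed

lemma card_adjacent_blocks:
  assumes pre: "layer_prefix k P"
  shows "finite (adjacent_blocks k P b) \<and> card (adjacent_blocks k P b) \<le> 2"
proof -
  define Rr where "Rr = {y \<in> L (Suc k). block_root k P y \<noteq> b \<and> (\<exists>a\<in>L (Suc k). block_root k P a = b \<and> consec a y)}"
  define Rl where "Rl = {y \<in> L (Suc k). block_root k P y \<noteq> b \<and> (\<exists>a\<in>L (Suc k). block_root k P a = b \<and> consec y a)}"
  have sub: "adjacent_blocks k P b \<subseteq> block_root k P ` (Rr \<union> Rl)"
  proof
    fix z assume "z \<in> adjacent_blocks k P b"
    then obtain y where "z = block_root k P y" "y \<in> L (Suc k)" "block_root k P y \<noteq> b"
      "\<exists>a\<in>L (Suc k). block_root k P a = b \<and> (consec a y \<or> consec y a)"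
      unfolding adjacent_blocks_def by blast
    then show "z \<in> block_root k P ` (Rr \<union> Rl)" unfolding Rr_def Rl_def by blast
  qed
  have fin: "finite Rr" "finite Rl" unfolding Rr_def Rl_def using finite_layer by simp_all
  have "\<forall>y1\<in>Rr. \<forall>y2\<in>Rr. y1 = y2"
    unfolding Rr_def using block_exit_right_unique[OF pre] by (smt (verit) mem_Collect_eq)
  then have "card Rr \<le> Suc 0" using card_le_Suc0_iff_eq[OF fin(1)] by blast
  have "\<forall>y1\<in>Rl. \<forall>y2\<in>Rl. y1 = y2"
    unfolding Rl_def using block_exit_left_unique[OF pre] by (smt (verit) mem_Collect_eq)
  then have "card Rl \<le> Suc 0" using card_le_Suc0_iff_eq[OF fin(2)] by blast
  have "card (adjacent_blocks k P b) \<le> card (block_root k P ` (Rr \<union> Rl))"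
    using sub fin by (intro card_mono) auto
  also have "\<dots> \<le> card (Rr \<union> Rl)" by (rule card_image_le) (use fin in simp)
  also have "\<dots> \<le> card Rr + card Rl" by (rule card_Un_le)
  finally show ?thesis
    using \<open>card Rr \<le> Suc 0\<close> \<open>card Rl \<le> Suc 0\<close> finite_subset[OF sub] fin by simp
qed

lemma settled_insert_new:
  assumes "settled k (insert w P) x" "\<not> settled k P x"
  shows "x = par w"
proof -
  have x: "x \<in> V" "\<not> k < dep x" using assms unfolding settled_def by auto
  then have "dep x = k" "children V r par x \<subseteq> insert w P"
    using assms(1) unfolding settled_def by auto
  moreover have "\<not> children V r par x \<subseteq> P" using assms(2) x \<open>dep x = k\<close> unfolding settled_def by auto
  ultimately have "w \<in> children V r par x" by blast
  then show ?thesis unfolding children_iff by simp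
qed

lemma block_root_insert:
  assumes x: "settled k P x" and w: "w \<in> L (Suc k)" "w \<notin> P"
  shows "block_root k (insert w P) x = (if block_root k P x = w then par w else block_root k P x)"
proof (cases "dep x = k")
  case True
  then show ?thesis using w layer_iff unfolding block_root_def by auto
next
  case False
  have xV: "x \<in> V" "k < dep x" using settledD[OF x] False by auto
  define a where "a = ancestor_at x (Suc k)"
  have a: "a \<in> L (Suc k)" using ancestor_at_in_V[of x "Suc k"] xV layer_iff a_def by simp
  have roots: "block_root k P x = block_root k P a" "block_root k (insert w P) x = block_root k (insert w P) a"
    using block_root_below[OF xV] a_def by auto
  show ?thesis
  proof (cases "a = w")
    case True
    then show ?thesis using roots block_root_layer_in[OF a] block_root_layer_notin[OF a] w(2) by simp
  next
    case False
    have "block_root k P a \<noteq> w"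
    proof (cases "a \<in> P")
      case True
      then show ?thesis using block_root_layer_in[OF a] w(1) layer_iff by auto
    next
      case False
      then show ?thesis using block_root_layer_notin[OF a] \<open>a \<noteq> w\<close> by simp
    qed
    moreover have "block_root k (insert w P) a = block_root k P a"
      using False a layer_iff unfolding block_root_def by auto
    ultimately show ?thesis using roots by simp
  qed
qed

lemma settled_next_level: "settled (Suc k) (L (Suc (Suc k))) z \<longleftrightarrow> settled k {} z"
proof -
  have "children V r par z \<subseteq> L (Suc (Suc k))" if "dep z = Suc k"
    using depth_child children_iff layer_iff that by auto
  then show ?thesis
    using children_nonempty[of z] unfolding settled_def by (cases "dep z = Suc k") auto
qed

lemma block_root_next_level:
  assumes "settled k {} z"
  shows "block_root (Suc k) (L (Suc (Suc k))) z = block_root k {} z"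
proof -
  have z: "z \<in> V" "Suc k \<le> dep z"
    using assms children_nonempty unfolding settled_def by auto
  show ?thesis
  proof (cases "dep z = Suc k")
    case False
    then have d: "Suc (Suc k) \<le> dep z" using z by simp
    then have "ancestor_at z (Suc (Suc k)) \<in> L (Suc (Suc k))"
      using ancestor_at_in_V[OF z(1) d] layer_iff by simp
    then show ?thesis
      using par_ancestor_at[OF d] False z unfolding block_root_def by simp
  qed (unfold block_root_def, simp)
qed

lemma ancestor_at_0: "x \<in> V \<Longrightarrow> ancestor_at x 0 = r"
  unfolding ancestor_at_def using funpow_depth_root by simp

lemma settled_top:
  assumes "x \<in> V"
  shows "settled 0 (L 1) x" "block_root 0 (L 1) x = r"
proof -
  have "children V r par x \<subseteq> L 1" if "dep x = 0"
    using depth_child children_iff layer_iff that by auto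
  then show "settled 0 (L 1) x" using assms unfolding settled_def by auto
  show "block_root 0 (L 1) x = r"
  proof (cases "dep x = 0")
    case False
    then have d: "Suc 0 \<le> dep x" by simp
    then have "ancestor_at x 1 \<in> L 1" using ancestor_at_in_V[OF assms d] layer_iff by simp
    then show ?thesis
      using par_ancestor_at[OF d] ancestor_at_0[OF assms] False unfolding block_root_def by simp
  qed (use assms depth_eq_0 in \<open>simp add: block_root_def\<close>)
qed

lemma not_settled_bottom: "dep x \<le> K \<Longrightarrow> \<not> settled K {} x"
  using children_nonempty unfolding settled_def by auto

end

section \<open>Upward-restricted layered wheels\<close>

text \<open>\<open>X v\<close> is the set \<open>X\<^sub>v\<close> of the upward restriction.\<close>

locale upward_restricted_wheel = neat_plane_tree V r par lt
  for V :: "'a set" and r :: 'a and par :: "'a \<Rightarrow> 'a" and lt :: "'a \<Rightarrow> 'a \<Rightarrow> bool" +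
  fixes E :: "'a \<Rightarrow> 'a \<Rightarrow> bool" and t :: nat and X :: "'a \<Rightarrow> 'a set"
  assumes edge_sym: "E u v \<Longrightarrow> E v u"
    and layer_edge_consecutive: "E u v \<Longrightarrow> u \<in> V \<Longrightarrow> v \<in> V \<Longrightarrow> depth r par u = depth r par v
      \<Longrightarrow> consecutive lt u v \<or> consecutive lt v u"
    and cross_edge_ancestor: "E u v \<Longrightarrow> depth r par u \<noteq> depth r par v
      \<Longrightarrow> ancestor r par u v \<or> ancestor r par v u"
    and finite_X: "v \<in> V \<Longrightarrow> finite (X v)"
    and card_X: "v \<in> V \<Longrightarrow> card (X v) \<le> t"
    and X_upward: "v \<in> V \<Longrightarrow> E x y \<Longrightarrow> depth r par x \<noteq> depth r par y \<Longrightarrow> ancestor r par v x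
      \<Longrightarrow> \<not> ancestor r par v y \<Longrightarrow> y \<in> X v"
begin

abbreviation contraction_bound :: nat where
  "contraction_bound \<equiv> (2 + 2 * 2 ^ (t + 3)) * (3 * 2 ^ (t + 3) + 1)"

definition unsettled :: "nat \<Rightarrow> 'a set \<Rightarrow> 'a set" where
  "unsettled k P = {x\<in>V. \<not> settled k P x}"

definition stage_key :: "nat \<Rightarrow> 'a set \<Rightarrow> 'a \<Rightarrow> ('a \<times> 'a set) + 'a" where
  "stage_key k P u =
     (if settled k P u then Inl (block_root k P u, {x\<in>unsettled k P. E u x}) else Inr u)"

definition block_frontier :: "nat \<Rightarrow> 'a set \<Rightarrow> 'a \<Rightarrow> 'a set" where
  "block_frontier k P b = {x\<in>unsettled k P. \<exists>y. settled k P y \<and> block_root k P y = b \<and> E y x}"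

lemma unsettled_depth: "x \<in> unsettled k P \<Longrightarrow> x \<in> V \<and> dep x \<le> k"
  unfolding unsettled_def settled_def by auto

lemma unsettled_insert: "unsettled k (insert w P) \<subseteq> unsettled k P"
  unfolding unsettled_def using settled_mono[of P "insert w P"] by blast

text \<open>A frontier vertex sees the block from above: it is either on layer \<open>k\<close> and then
  the block root or one of its layer neighbours, or it is joined to the subtree of the root by
  a non-layer edge and then lies in the upward restriction set of the root.\<close>

lemma block_frontier_subset:
  assumes "x \<in> block_frontier k P b"
  shows "b \<in> V \<and> x \<in> X b \<union> {b} \<union> {z. consec b z} \<union> {z. consec z b}"
proof -
  obtain y where y: "settled k P y" "block_root k P y = b" "E y x" and x: "x \<in> unsettled k P"
    using assms unfolding block_frontier_def by blast
  have xV: "x \<in> V" "dep x \<le> k" using unsettled_depth[OF x] by auto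
  have b: "anc b y" "k \<le> dep b" "b \<in> V" using block_root_ancestor[OF y(1)] y(2) by auto
  have yV: "y \<in> V" "k \<le> dep y" using settledD[OF y(1)] by auto
  show ?thesis
  proof (cases "dep x = dep y")
    case True
    then have "y = b" using settled_on_layer[OF y(1)] y(2) xV yV by simp
    then show ?thesis using layer_edge_consecutive[OF y(3) yV(1) xV(1)] True b(3) by auto
  next
    case False
    show ?thesis
    proof (cases "anc b x")
      case True
      then have "b = x" using ancestor_same_depth[OF xV(1)] ancestor_depth_le[OF xV(1)] xV b by force
      then show ?thesis using b by blast
    next
      case False
      then show ?thesis using X_upward[OF b(3) y(3)] \<open>dep x \<noteq> dep y\<close> b by (simp add: eq_commute)
    qed
  qed
qed

lemma card_consecutive_le:
  assumes "b \<in> V"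
  shows "finite {z. consec b z} \<and> card {z. consec b z} \<le> 1"
    and "finite {z. consec z b} \<and> card {z. consec z b} \<le> 1"
proof -
  have "{z. consec b z} \<subseteq> L (dep b)" "{z. consec z b} \<subseteq> L (dep b)"
    using consecutive_lt lt_layer layer_iff by fastforce+
  then have fin: "finite {z. consec b z}" "finite {z. consec z b}"
    using finite_layer finite_subset by blast+
  show "finite {z. consec b z} \<and> card {z. consec b z} \<le> 1"
    using card_le_Suc0_iff_eq[OF fin(1)] consecutive_unique_right fin(1) by auto
  show "finite {z. consec z b} \<and> card {z. consec z b} \<le> 1"
    using card_le_Suc0_iff_eq[OF fin(2)] consecutive_unique_left fin(2) by auto
qed

lemma card_block_frontier: "finite (block_frontier k P b) \<and> card (block_frontier k P b) \<le> t + 3"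
proof (cases "block_frontier k P b = {}")
  case False
  then have b: "b \<in> V" using block_frontier_subset by blast
  define A where "A = X b \<union> {b} \<union> {z. consec b z} \<union> {z. consec z b}"
  have sub: "block_frontier k P b \<subseteq> A" unfolding A_def using block_frontier_subset by blast
  have fin: "finite (X b)" "card (X b) \<le> t" using finite_X card_X b by auto
  note cons = card_consecutive_le[OF b]
  have "finite A" unfolding A_def using fin cons by simp
  have "card A \<le> card (X b \<union> {b} \<union> {z. consec b z}) + card {z. consec z b}"
    unfolding A_def by (rule card_Un_le)
  also have "\<dots> \<le> card (X b \<union> {b}) + card {z. consec b z} + card {z. consec z b}"
    using card_Un_le[of "X b \<union> {b}"] by simp
  also have "\<dots> \<le> card (X b) + card {b} + card {z. consec b z} + card {z. consec z b}"
    using card_Un_le[of "X b" "{b}"] by simp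
  also have "\<dots> \<le> t + 3" using fin cons by simp
  finally show ?thesis using card_mono[OF \<open>finite A\<close> sub] finite_subset[OF sub \<open>finite A\<close>] by simp
qed simp

lemma stage_key_settled: "settled k P x \<Longrightarrow> stage_key k P x = Inl (block_root k P x, {z\<in>unsettled k P. E x z})"
  unfolding stage_key_def by simp

lemma stage_key_unsettled: "\<not> settled k P x \<Longrightarrow> stage_key k P x = Inr x"
  unfolding stage_key_def by simp

lemma stage_key_eq_Inl:
  "stage_key k P x = Inl (b, N) \<Longrightarrow> settled k P x \<and> block_root k P x = b \<and> N = {z\<in>unsettled k P. E x z}"
  unfolding stage_key_def by (cases "settled k P x") auto

lemma stage_key_eq_Inr: "stage_key k P x = Inr y \<Longrightarrow> x = y \<and> \<not> settled k P x"
  unfolding stage_key_def by (cases "settled k P x") auto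

lemma stage_key_homogeneous:
  assumes "stage_key k P x = stage_key k P y" "z \<in> unsettled k P"
  shows "E x z \<longleftrightarrow> E y z"
proof (cases "settled k P x")
  case True
  then have "stage_key k P y = Inl (block_root k P x, {z\<in>unsettled k P. E x z})"
    using assms(1) stage_key_settled by simp
  then have "{z\<in>unsettled k P. E x z} = {z\<in>unsettled k P. E y z}" using stage_key_eq_Inl by blast
  then show ?thesis using assms(2) by blast
next
  case False
  then show ?thesis using assms(1) stage_key_unsettled stage_key_eq_Inr by metis
qed

lemma adjacent_blocksI:
  assumes "y \<in> L (Suc k)" "block_root k P y \<noteq> b" "a \<in> L (Suc k)" "block_root k P a = b"
    "consec a y \<or> consec y a"
  shows "block_root k P y \<in> adjacent_blocks k P b"
  using assms unfolding adjacent_blocks_def by blast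

text \<open>Edges between different blocks are layer edges (an ancestor and a descendant lie in
  the same block), and their endpoints project to consecutive vertices of \<open>L (Suc k)\<close>.\<close>

lemma edge_between_blocks:
  assumes u: "settled k P u" and u': "settled k P u'"
    and ne: "block_root k P u \<noteq> block_root k P u'" and e: "E u u'"
  shows "block_root k P u' \<in> adjacent_blocks k P (block_root k P u)"
proof -
  have uV: "u \<in> V" "u' \<in> V" using settledD u u' by auto
  have "dep u = dep u'"
  proof (rule ccontr)
    assume nd: "dep u \<noteq> dep u'"
    then consider "anc u u'" | "anc u' u" using cross_edge_ancestor e by blast
    then show False
    proof cases
      case 1
      then show False using same_block_if_ancestor[OF u u'] ancestor_depth_le[OF uV(2)] nd ne by force
    next
      case 2
      then show False using same_block_if_ancestor[OF u' u] ancestor_depth_le[OF uV(1)] nd ne by force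
    qed
  qed
  then consider "consec u u'" | "consec u' u" using layer_edge_consecutive[OF e uV] by blast
  then show ?thesis
  proof cases
    case 1
    obtain a b where "a \<in> L (Suc k)" "b \<in> L (Suc k)" "block_root k P a = block_root k P u"
      "block_root k P b = block_root k P u'" "consec a b"
      using consecutive_blocks[OF u u' ne 1] .
    then show ?thesis using adjacent_blocksI ne by metis
  next
    case 2
    obtain a b where "a \<in> L (Suc k)" "b \<in> L (Suc k)" "block_root k P a = block_root k P u'"
      "block_root k P b = block_root k P u" "consec a b"
      using consecutive_blocks[OF u' u ne[symmetric] 2] .
    then show ?thesis using adjacent_blocksI ne by metis
  qed
qed


lemma stage_key_insert:
  assumes w: "w \<in> L (Suc k)" "w \<notin> P" and eq: "stage_key k P x = stage_key k P y"
  shows "stage_key k (insert w P) x = stage_key k (insert w P) y"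
proof (cases "settled k P x")
  case True
  then have y: "settled k P y" "block_root k P y = block_root k P x"
    "{z\<in>unsettled k P. E x z} = {z\<in>unsettled k P. E y z}"
    using eq stage_key_settled[OF True] stage_key_eq_Inl by metis+
  have "{z\<in>unsettled k (insert w P). E x z} = {z\<in>unsettled k (insert w P). E y z}"
    using y(3) unsettled_insert[of k w P] by blast
  moreover have "settled k (insert w P) x" "settled k (insert w P) y"
    using settled_mono[OF subset_insertI] True y(1) by blast+
  ultimately show ?thesis
    using stage_key_settled block_root_insert[OF True w] block_root_insert[OF y(1) w] y(2) by simp
next
  case False
  then show ?thesis using eq stage_key_unsettled stage_key_eq_Inr by metis
qed

text \<open>Moving \<open>w\<close> into \<open>P\<close> merges the block of \<open>w\<close> into the block of its parent and
  settles at most the parent itself.\<close>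

lemma stage_key_before_insert:
  assumes w: "w \<in> L (Suc k)" "w \<notin> P"
    and eq: "stage_key k (insert w P) x = stage_key k (insert w P) u"
  shows "stage_key k P x \<in> {Inr u, Inr (par w)}
    \<union> Inl ` Sigma {block_root k (insert w P) u, w} (\<lambda>b. Pow (block_frontier k P b))"
proof (cases "settled k P x")
  case True
  then have "stage_key k (insert w P) u = stage_key k (insert w P) x" using eq by simp
  also have "\<dots> = Inl (block_root k (insert w P) x, {z\<in>unsettled k (insert w P). E x z})"
    using stage_key_settled settled_mono[of P "insert w P"] True by blast
  finally have "block_root k (insert w P) u = block_root k (insert w P) x"
    using stage_key_eq_Inl by metis
  then have "block_root k P x \<in> {block_root k (insert w P) u, w}"
    using block_root_insert[OF True w] by auto
  moreover have "{z\<in>unsettled k P. E x z} \<subseteq> block_frontier k P (block_root k P x)"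
    unfolding block_frontier_def using True by blast
  ultimately show ?thesis using stage_key_settled[OF True] by blast
next
  case False
  show ?thesis
  proof (cases "settled k (insert w P) x")
    case True
    then show ?thesis using settled_insert_new False stage_key_unsettled[OF False] by simp
  next
    case False
    then have "x = u" using eq stage_key_unsettled stage_key_eq_Inr by metis
    then show ?thesis using stage_key_unsettled \<open>\<not> settled k P x\<close> by simp
  qed
qed

lemma card_stage_keys_before_insert:
  fixes k :: nat and P :: "'a set" and u w b :: 'a
  defines "K \<equiv> {Inr u, Inr (par w)} \<union> Inl ` Sigma {b, w} (\<lambda>b. Pow (block_frontier k P b))"
  shows "finite K \<and> card K \<le> 2 + 2 * 2 ^ (t + 3)"
proof -
  have sigma: "finite (Sigma {b, w} (\<lambda>b. Pow (block_frontier k P b)))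
    \<and> card (Sigma {b, w} (\<lambda>b. Pow (block_frontier k P b))) \<le> card {b, w} * 2 ^ (t + 3)"
    by (rule card_Sigma_Pow_le) (auto simp: card_block_frontier)
  have "card {b, w} * 2 ^ (t + 3) \<le> 2 * 2 ^ (t + 3)" by (simp add: card_insert_if)
  then have inl: "card (Inl ` Sigma {b, w} (\<lambda>b. Pow (block_frontier k P b)) :: ('a \<times> 'a set + 'a) set)
      \<le> 2 * 2 ^ (t + 3)"
    using card_image_le[of _ Inl] sigma by (meson order_trans)
  have inr: "card ({Inr u, Inr (par w)} :: ('a \<times> 'a set + 'a) set) \<le> 2"
    by (simp add: card_insert_if)
  have "card K \<le> card ({Inr u, Inr (par w)} :: ('a \<times> 'a set + 'a) set)
      + card (Inl ` Sigma {b, w} (\<lambda>b. Pow (block_frontier k P b)) :: ('a \<times> 'a set + 'a) set)"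
    unfolding K_def by (rule card_Un_le)
  then show ?thesis using inl inr sigma unfolding K_def by simp
qed

lemma layer_prefix_insert_leftmost:
  assumes pre: "layer_prefix k P" and w: "w \<in> L (Suc k)" and leftmost: "\<forall>b\<in>L (Suc k) - P. \<not> lt b w"
  shows "layer_prefix k (insert w P)"
  unfolding layer_prefix_def
proof (intro conjI allI impI)
  show "insert w P \<subseteq> L (Suc k)" using pre w unfolding layer_prefix_def by simp
  fix b c assume bc: "lt b c" "c \<in> insert w P"
  show "b \<in> insert w P"
  proof (cases "c = w")
    case True
    then have "b \<in> L (Suc k)" using lt_layer[OF bc(1)] w layer_iff by auto
    then show ?thesis using leftmost bc(1) True by blast
  next
    case False
    then show ?thesis using pre bc unfolding layer_prefix_def by blast
  qed
qed

lemma unsettled_next_level: "unsettled (Suc k) (L (Suc (Suc k))) = unsettled k {}"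
  unfolding unsettled_def using settled_next_level by blast

lemma stage_key_next_level: "stage_key (Suc k) (L (Suc (Suc k))) x = stage_key k {} x"
  unfolding stage_key_def settled_next_level unsettled_next_level
  using block_root_next_level by simp

lemma stage_key_top: "x \<in> V \<Longrightarrow> stage_key 0 (L 1) x = Inl (r, {})"
  using settled_top unfolding stage_key_def unsettled_def by simp

lemma stage_key_bottom: "dep x \<le> K \<Longrightarrow> stage_key K {} x = Inr x"
  using not_settled_bottom stage_key_unsettled by blast

context
  fixes S :: "'a set"
  assumes finite_S: "finite S" and S_in_V: "S \<subseteq> V"
begin

lemma red_edge_stage_classes:
  assumes u: "u \<in> S" "u' \<in> S"
    and red: "red_edge E {x\<in>S. stage_key k P x = stage_key k P u} {x\<in>S. stage_key k P x = stage_key k P u'}"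
  shows "settled k P u \<and> settled k P u' \<and>
    (block_root k P u' = block_root k P u \<or> block_root k P u' \<in> adjacent_blocks k P (block_root k P u))"
proof -
  from red obtain u1 v1 u2 v2 where
    "u1 \<in> {x\<in>S. stage_key k P x = stage_key k P u}" "v1 \<in> {x\<in>S. stage_key k P x = stage_key k P u}"
    "u2 \<in> {x\<in>S. stage_key k P x = stage_key k P u'}" "v2 \<in> {x\<in>S. stage_key k P x = stage_key k P u'}"
    and e: "E u1 u2" "\<not> E v1 v2"
    unfolding red_edge_def by blast
  then have keys: "stage_key k P u1 = stage_key k P u" "stage_key k P v1 = stage_key k P u"
    "stage_key k P u2 = stage_key k P u'" "stage_key k P v2 = stage_key k P u'"
    by simp_all
  have settled_u': "settled k P u'"
  proof (rule ccontr)
    assume n: "\<not> settled k P u'"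
    then have "stage_key k P u2 = Inr u'" "stage_key k P v2 = Inr u'"
      using keys(3,4) stage_key_unsettled by simp_all
    then have "u2 = u'" "v2 = u'" by (auto dest: stage_key_eq_Inr)
    moreover have "u' \<in> unsettled k P" using n u S_in_V unfolding unsettled_def by blast
    ultimately show False using stage_key_homogeneous[of k P u1 v1] keys(1,2) e by simp
  qed
  have settled_u: "settled k P u"
  proof (rule ccontr)
    assume n: "\<not> settled k P u"
    then have "stage_key k P u1 = Inr u" "stage_key k P v1 = Inr u"
      using keys(1,2) stage_key_unsettled by simp_all
    then have "u1 = u" "v1 = u" by (auto dest: stage_key_eq_Inr)
    moreover have "u \<in> unsettled k P" using n u S_in_V unfolding unsettled_def by blast
    ultimately have "E u2 u \<longleftrightarrow> E v2 u" using stage_key_homogeneous[of k P u2 v2] keys(3,4) by simp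
    then show False using e edge_sym \<open>u1 = u\<close> \<open>v1 = u\<close> by metis
  qed
  have "settled k P u1" "block_root k P u1 = block_root k P u"
    using keys(1) stage_key_settled[OF settled_u] by (auto dest: stage_key_eq_Inl)
  moreover have "settled k P u2" "block_root k P u2 = block_root k P u'"
    using keys(3) stage_key_settled[OF settled_u'] by (auto dest: stage_key_eq_Inl)
  ultimately show ?thesis
    using edge_between_blocks[of k P u1 u2] e(1) settled_u settled_u'
    by (cases "block_root k P u = block_root k P u'") auto
qed

text \<open>A class is red-adjacent only to classes of its own block and of the at most two
  adjacent blocks, and each block has at most \<open>2 ^ (t + 3)\<close> classes.\<close>

lemma red_maxdeg_stage:
  assumes pre: "layer_prefix k P"
  shows "red_maxdeg_le E (kernel_partition S (stage_key k P)) (3 * 2 ^ (t + 3))"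
proof (rule red_maxdeg_le_kernel_partition)
  fix u assume u: "u \<in> S"
  show "\<exists>K. finite K \<and> card K \<le> 3 * 2 ^ (t + 3) \<and> (\<forall>u'\<in>S.
    red_edge E {x\<in>S. stage_key k P x = stage_key k P u} {x\<in>S. stage_key k P x = stage_key k P u'}
      \<longrightarrow> stage_key k P u' \<in> K)"
  proof (cases "settled k P u")
    case False
    then show ?thesis using red_edge_stage_classes[OF u] by (intro exI[of _ "{}"]) auto
  next
    case True
    define I where "I = insert (block_root k P u) (adjacent_blocks k P (block_root k P u))"
    have I: "finite I" "card I \<le> 3"
      using card_adjacent_blocks[OF pre] card_insert_le_m1[of _ "adjacent_blocks k P (block_root k P u)"]
      unfolding I_def by fastforce+
    define K :: "('a \<times> 'a set + 'a) set" where "K = Inl ` Sigma I (\<lambda>b. Pow (block_frontier k P b))"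
    have sigma: "finite (Sigma I (\<lambda>b. Pow (block_frontier k P b)))
      \<and> card (Sigma I (\<lambda>b. Pow (block_frontier k P b))) \<le> card I * 2 ^ (t + 3)"
      by (rule card_Sigma_Pow_le) (auto simp: I(1) card_block_frontier)
    have "finite K" unfolding K_def using sigma by simp
    moreover have "card K \<le> card I * 2 ^ (t + 3)"
      unfolding K_def using card_image_le[of _ Inl] sigma by (meson order_trans)
    then have "card K \<le> 3 * 2 ^ (t + 3)"
      using mult_le_mono1[OF I(2)] order_trans by blast
    moreover have "stage_key k P u' \<in> K"
      if u': "u' \<in> S" and red: "red_edge E {x\<in>S. stage_key k P x = stage_key k P u}
        {x\<in>S. stage_key k P x = stage_key k P u'}" for u'
    proof -
      have "settled k P u'" "block_root k P u' \<in> I"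
        using red_edge_stage_classes[OF u u' red] unfolding I_def by auto
      moreover have "{z\<in>unsettled k P. E u' z} \<subseteq> block_frontier k P (block_root k P u')"
        unfolding block_frontier_def using calculation(1) by blast
      ultimately show ?thesis unfolding K_def using stage_key_settled by blast
    qed
    ultimately show ?thesis by blast
  qed
qed

lemma red_merges_stage_step:
  assumes pre: "layer_prefix k P" and w: "w \<in> L (Suc k)" "w \<notin> P"
    and leftmost: "\<forall>b\<in>L (Suc k) - P. \<not> lt b w"
  shows "red_merges E contraction_bound
    (kernel_partition S (stage_key k P)) (kernel_partition S (stage_key k (insert w P)))"
proof (rule red_merges_coarsening[OF finite_S])
  show "red_maxdeg_le E (kernel_partition S (stage_key k (insert w P))) (3 * 2 ^ (t + 3))"
    using red_maxdeg_stage layer_prefix_insert_leftmost[OF pre w(1) leftmost] by blast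
  show "refines S (kernel_partition S (stage_key k P)) (kernel_partition S (stage_key k (insert w P)))"
    using stage_key_insert[OF w] by (intro refines_kernel_partition)
  show "\<forall>c\<in>kernel_partition S (stage_key k (insert w P)).
      card {b\<in>kernel_partition S (stage_key k P). b \<subseteq> c} \<le> 2 + 2 * 2 ^ (t + 3)"
  proof
    fix c assume "c \<in> kernel_partition S (stage_key k (insert w P))"
    then obtain u where u: "u \<in> S" "c = {x\<in>S. stage_key k (insert w P) x = stage_key k (insert w P) u}"
      by (rule kernel_partitionE)
    let ?K = "{Inr u, Inr (par w)}
      \<union> Inl ` Sigma {block_root k (insert w P) u, w} (\<lambda>b. Pow (block_frontier k P b))"
    have K: "finite ?K \<and> card ?K \<le> 2 + 2 * 2 ^ (t + 3)"
      by (rule card_stage_keys_before_insert)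
    have "stage_key k P ` {x\<in>S. stage_key k (insert w P) x = stage_key k (insert w P) u} \<subseteq> ?K"
      using stage_key_before_insert[OF w] by blast
    then have "card {b\<in>kernel_partition S (stage_key k P). b \<subseteq> c} \<le> card ?K"
      unfolding u(2) using K by (intro card_kernel_classes_within[OF u(1)]) auto
    then show "card {b\<in>kernel_partition S (stage_key k P). b \<subseteq> c} \<le> 2 + 2 * 2 ^ (t + 3)"
      using K by simp
  qed
qed

lemma red_merges_stage_layer:
  assumes "layer_prefix k P"
  shows "red_merges E contraction_bound
    (kernel_partition S (stage_key k P)) (kernel_partition S (stage_key k (L (Suc k))))"
  using assms
proof (induction "card (L (Suc k) - P)" arbitrary: P)
  case 0
  then have "P = L (Suc k)" using finite_layer unfolding layer_prefix_def by auto
  have "3 * 2 ^ (t + 3) \<le> contraction_bound" by simp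
  with red_maxdeg_stage[OF 0(2)]
  have "red_maxdeg_le E (kernel_partition S (stage_key k P)) contraction_bound"
    by (rule red_maxdeg_le_mono)
  then show ?case unfolding \<open>P = L (Suc k)\<close> by (rule red_merges.refl)
next
  case (Suc n)
  have fin: "finite (L (Suc k) - P)" using finite_layer by simp
  moreover have "L (Suc k) - P \<noteq> {}" using Suc.hyps(2) by (metis card.empty Zero_neq_Suc)
  ultimately obtain w where w: "w \<in> L (Suc k) - P" "\<forall>b\<in>L (Suc k) - P. \<not> lt b w"
    by (rule ex_leftmost)
  have "L (Suc k) - insert w P = (L (Suc k) - P) - {w}" by blast
  then have "n = card (L (Suc k) - insert w P)"
    using Suc.hyps(2) w(1) fin by (simp add: card_Diff_singleton)
  moreover have "layer_prefix k (insert w P)"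
    using layer_prefix_insert_leftmost[OF Suc.prems] w by blast
  ultimately have "red_merges E contraction_bound
    (kernel_partition S (stage_key k (insert w P))) (kernel_partition S (stage_key k (L (Suc k))))"
    by (rule Suc.hyps(1))
  with red_merges_stage_step[OF Suc.prems] w show ?case
    by (blast intro: red_merges_trans)
qed

lemma stage_partition_next_level:
  "kernel_partition S (stage_key (Suc k) (L (Suc (Suc k)))) = kernel_partition S (stage_key k {})"
  using stage_key_next_level by (rule kernel_partition_cong)

lemma stage_partition_top:
  assumes "S \<noteq> {}" shows "kernel_partition S (stage_key 0 (L 1)) = {S}"
proof -
  have "kernel_partition S (stage_key 0 (L 1)) = (\<lambda>u. S) ` S"
  proof -
    have "stage_key 0 (L 1) x = Inl (r, {})" if "x \<in> S" for x
      using stage_key_top S_in_V that by blast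
    then show ?thesis unfolding kernel_partition_def by (intro image_cong) auto
  qed
  then show ?thesis using assms by auto
qed

lemma stage_partition_bottom:
  "\<forall>x\<in>S. dep x \<le> K \<Longrightarrow> kernel_partition S (stage_key K {}) = (\<lambda>x. {x}) ` S"
  using stage_key_bottom unfolding kernel_partition_def by (intro image_cong) auto

lemma red_merges_stages_to_top:
  assumes "S \<noteq> {}"
  shows "red_merges E contraction_bound
    (kernel_partition S (stage_key k {})) {S}"
proof (induction k)
  case 0
  have "layer_prefix 0 {}" unfolding layer_prefix_def by simp
  from red_merges_stage_layer[OF this] show ?case
    by (simp add: stage_partition_top[OF assms, unfolded One_nat_def])
next
  case (Suc k)
  have "layer_prefix (Suc k) {}" unfolding layer_prefix_def by simp
  from red_merges_stage_layer[OF this]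
  have "red_merges E contraction_bound
    (kernel_partition S (stage_key (Suc k) {})) (kernel_partition S (stage_key k {}))"
    by (simp add: stage_partition_next_level)
  then show ?case using Suc.IH by (rule red_merges_trans)
qed

lemma twin_width_le: "twin_width E S \<le> contraction_bound"
proof (cases "S = {}")
  case False
  have "\<forall>x\<in>S. dep x \<le> Max (dep ` S)" using finite_S by simp
  from red_merges_stages_to_top[OF False, of "Max (dep ` S)"]
  have "red_merges E contraction_bound ((\<lambda>x. {x}) ` S) {S}"
    by (simp add: stage_partition_bottom[OF \<open>\<forall>x\<in>S. dep x \<le> Max (dep ` S)\<close>])
  then show ?thesis by (rule twin_width_le_if_red_merges[OF finite_S])
qed (simp add: twin_width_empty)

end

end

lemma neat_upward_restricted_layered_wheel:
  assumes wheel: "layered_wheel V r par lt E" and neat: "neat V r par"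
    and restricted: "upward_restricted V r par E"
  shows "\<exists>t X. upward_restricted_wheel V r par lt E t X"
proof -
  obtain t where t: "\<forall>v\<in>V. \<exists>X. finite X \<and> card X \<le> t \<and> (\<forall>x\<in>X. ancestor r par x v)
      \<and> (\<forall>x y. E x y \<and> \<not> layer_edge r par E x y \<and> ancestor r par v x \<and> \<not> ancestor r par v y
              \<longrightarrow> y \<in> X)"
    using restricted unfolding upward_restricted_def by blast
  obtain X where X: "\<forall>v\<in>V. finite (X v) \<and> card (X v) \<le> t \<and> (\<forall>x\<in>X v. ancestor r par x v)
      \<and> (\<forall>x y. E x y \<and> \<not> layer_edge r par E x y \<and> ancestor r par v x \<and> \<not> ancestor r par v y
              \<longrightarrow> y \<in> X v)"
    using bchoice[OF t] by blast
  have "upward_restricted_wheel V r par lt E t X"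
  proof unfold_locales
    show "rooted_tree V r par" "plane_order V r par lt" "finite (layer V r par n)" for n
      using wheel unfolding layered_wheel_def by blast+
    show "neat V r par" by (rule neat)
    show "E v u" if "E u v" for u v
      using wheel that unfolding layered_wheel_def simple_graph_def by blast
    show "consecutive lt u v \<or> consecutive lt v u"
      if "E u v" "u \<in> V" "v \<in> V" "depth r par u = depth r par v" for u v
    proof -
      have "u \<in> layer V r par (depth r par u)" "v \<in> layer V r par (depth r par u)"
        using that unfolding layer_def by auto
      then show ?thesis using wheel that(1) unfolding layered_wheel_def by blast
    qed
    show "ancestor r par u v \<or> ancestor r par v u" if "E u v" "depth r par u \<noteq> depth r par v" for u v
      using wheel that unfolding layered_wheel_def layer_edge_def by blast
    show "finite (X v)" "card (X v) \<le> t" if "v \<in> V" for v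
      using X that by blast+
    show "y \<in> X v" if "v \<in> V" "E x y" "depth r par x \<noteq> depth r par y" "ancestor r par v x"
      "\<not> ancestor r par v y" for v x y
      using X that unfolding layer_edge_def by blast
  qed
  then show ?thesis by blast
qed

theorem theorem1p14:
  fixes V :: "'a set" and r :: 'a and par :: "'a \<Rightarrow> 'a"
    and lt :: "'a \<Rightarrow> 'a \<Rightarrow> bool" and E :: "'a \<Rightarrow> 'a \<Rightarrow> bool"
  assumes "layered_wheel V r par lt E"
    and "neat V r par"
    and "upward_restricted V r par E"
  shows "\<exists>d::nat. \<forall>S. finite S \<and> S \<subseteq> V \<longrightarrow> twin_width E S \<le> d"
proof -
  obtain t X where wheel: "upward_restricted_wheel V r par lt E t X"
    using neat_upward_restricted_layered_wheel[OF assms] by blast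
  have "twin_width E S \<le> (2 + 2 * 2 ^ (t + 3)) * (3 * 2 ^ (t + 3) + 1)" if "finite S" "S \<subseteq> V" for S
    using upward_restricted_wheel.twin_width_le[OF wheel that] .
  then show ?thesis by blast
qed

end
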